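(* Let $k\in\mathbb{Z}^+$, let $G:\mathbb{R}\to\mathbb{R}$, and for real weights $\psi_1,\psi_2,\nu,\beta_i,\phi_{i,1},\phi_{i,2},\mu_i$ ($i=1,\dots,k$) let $g(y,e)=\nu+\sum_{i=1}^{k}\beta_iG(\phi_{i,1}y+\phi_{i,2}e+\mu_i)$. Consider the Markov chain $(x_t)$ on $\mathbb{R}^2$ defined by $$x_t=\Psi x_{t-1}+F(x_{t-1})+\Sigma\,\varepsilon_t,$$ where $x_t=(y_t,e_t)'$, $\Sigma=(1,1)'$, $\Psi=\begin{bmatrix}\psi_1&\psi_2\\0&0\end{bmatrix}$, $F(y,e)=(g(y,e),0)'$, and $(\varepsilon_t)$ is an i.i.d. sequence of real random variables. Assume: the distribution of $\varepsilon_t$ is absolutely continuous with respect to Lebesgue measure, with density positive everywhere on $\mathbb{R}$ and lower semi-continuous everywhere; $G\in C^\infty$ is bounded, nonconstant and asymptotically constant; $\psi_1+\psi_2\neq 0$; and $E|\varepsilon_t|<\infty$. Then a sufficient condition for $(x_t)$ to be geometrically ergodic is $|\psi_1|<1$.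
   Context: This chain is the state-space form of the PARNN$(1,k,1)$ process $y_t=\psi_1y_{t-1}+\psi_2e_{t-1}+g(y_{t-1},e_{t-1})+\varepsilon_t$. A Markov chain $(x_t)$ on $(\mathcal{X},\mathcal{B})$ with $t$-step transition probabilities $P^t(x,\cdot)$ is called geometrically ergodic if there exist a probability measure $\Pi$ on $(\mathcal{X},\mathcal{B})$ and a constant $\rho>1$ such that $\lim_{t\to\infty}\rho^t\|P^t(x,\cdot)-\Pi(\cdot)\|=0$ for each $x\in\mathcal{X}$, where $\|\cdot\|$ is the total variation norm; in that case the distribution of $x_t$ converges to $\Pi$ and $(x_t)$ is said to be asymptotically stationary. *)

theory Defs
  imports "HOL-Probability.Probability"
begin

definition lsc_real :: "(real \<Rightarrow> real) \<Rightarrow> bool" where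
  "lsc_real f \<longleftrightarrow> (\<forall>a. open {x. f x > a})"

definition smooth_real :: "(real \<Rightarrow> real) \<Rightarrow> bool" where
  "smooth_real G \<longleftrightarrow> (\<exists>D :: nat \<Rightarrow> real \<Rightarrow> real. D 0 = G \<and>
      (\<forall>n x. (D n has_real_derivative D (Suc n) x) (at x)))"

definition asymp_const :: "(real \<Rightarrow> real) \<Rightarrow> bool" where
  "asymp_const G \<longleftrightarrow> (\<exists>a b. (G \<longlongrightarrow> a) at_top \<and> (G \<longlongrightarrow> b) at_bot)"

definition parnn_g ::
  "(real \<Rightarrow> real) \<Rightarrow> nat \<Rightarrow> real \<Rightarrow> (nat \<Rightarrow> real) \<Rightarrow> (nat \<Rightarrow> real) \<Rightarrow> (nat \<Rightarrow> real)
    \<Rightarrow> (nat \<Rightarrow> real) \<Rightarrow> real \<Rightarrow> real \<Rightarrow> real" where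
  "parnn_g G k \<nu> \<beta> \<phi>1 \<phi>2 \<mu> y e = \<nu> + (\<Sum>i=1..k. \<beta> i * G (\<phi>1 i * y + \<phi>2 i * e + \<mu> i))"

text \<open>One step of the state-space recursion x_t = Psi x_{t-1} + F(x_{t-1}) + Sigma eps_t
  with Psi = [[psi1, psi2],[0,0]], F(y,e) = (g(y,e),0), Sigma = (1,1).\<close>
definition parnn_step ::
  "real \<Rightarrow> real \<Rightarrow> (real \<Rightarrow> real \<Rightarrow> real) \<Rightarrow> real \<times> real \<Rightarrow> real \<Rightarrow> real \<times> real" where
  "parnn_step \<psi>1 \<psi>2 g x \<epsilon> =
     (\<psi>1 * fst x + \<psi>2 * snd x + g (fst x) (snd x) + \<epsilon>, 0 * fst x + 0 * snd x + 0 + \<epsilon>)"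

definition trans_kernel ::
  "(real \<times> real \<Rightarrow> real \<Rightarrow> real \<times> real) \<Rightarrow> real measure \<Rightarrow> real \<times> real \<Rightarrow> (real \<times> real) measure" where
  "trans_kernel step D x = distr D borel (\<lambda>\<epsilon>. step x \<epsilon>)"

fun trans_iter ::
  "(real \<times> real \<Rightarrow> (real \<times> real) measure) \<Rightarrow> nat \<Rightarrow> real \<times> real \<Rightarrow> (real \<times> real) measure" where
  "trans_iter P 0 x = return borel x"
| "trans_iter P (Suc t) x = bind (trans_iter P t x) P"

text \<open>Total variation distance sup_A |M(A) - N(A)| over Borel sets (this is half
  the total variation norm of M - N; the factor is irrelevant for the limit below).\<close>
definition tv_dist :: "(real \<times> real) measure \<Rightarrow> (real \<times> real) measure \<Rightarrow> real" where
  "tv_dist M N = (SUP A \<in> sets (borel :: (real \<times> real) measure). \<bar>measure M A - measure N A\<bar>)"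

definition geometrically_ergodic :: "(real \<times> real \<Rightarrow> (real \<times> real) measure) \<Rightarrow> bool" where
  "geometrically_ergodic P \<longleftrightarrow>
     (\<exists>Pinv :: (real \<times> real) measure. prob_space Pinv \<and> sets Pinv = sets borel \<and>
        (\<exists>\<rho>::real. \<rho> > 1 \<and>
           (\<forall>x. (\<lambda>t. \<rho> ^ t * tv_dist (trans_iter P t x) Pinv) \<longlonglongrightarrow> 0)))"

end

theory Submission
  imports Defs
begin

text \<open>Write the state as \<open>x = (y, e)\<close> and \<open>h x = \<psi>1 y + \<psi>2 e + g y e\<close>; one step moves \<open>x\<close>
  to \<open>(h x + \<epsilon>, \<epsilon>)\<close>. Since \<open>g\<close> is bounded and \<open>\<epsilon>\<close> integrable,
  \<open>V (y, e) = \<bar>y\<bar> + (\<bar>\<psi>2\<bar> + 1) \<bar>e\<bar>\<close> satisfies the drift condition \<open>P V \<le> \<gamma> V + K\<close> with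
  \<open>\<gamma> = max \<bar>\<psi>1\<bar> (\<bar>\<psi>2\<bar> / (\<bar>\<psi>2\<bar> + 1)) < 1\<close>.
  The value \<open>c = h x\<close> itself follows the scalar recursion \<open>c' = u c \<epsilon>\<close> with
  \<open>u c e = h (c + e, e) = \<psi>1 c + (\<psi>1 + \<psi>2) e + g (c + e) e\<close>. As \<open>\<psi>1 + \<psi>2 \<noteq> 0\<close> and \<open>g\<close> is
  bounded, \<open>u c\<close> has a zero, so from a sublevel set of \<open>V\<close> one step brings \<open>c\<close> near \<open>0\<close> with
  probability bounded below; \<open>u 0\<close> is not constant, so a second step gives \<open>c\<close> a density bounded
  below on an interval (the noise density is positive and lower semicontinuous), and the third
  step spreads this mass over the plane. Hence all sublevel sets of \<open>V\<close> are small for the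
  three-step kernel, and Harris' theorem, in the form of Hairer and Mattingly (a contraction of a
  weighted oscillation seminorm), yields an invariant law approached at a geometric rate.\<close>

section \<open>Harris' contraction\<close>

text \<open>\<open>weighted_osc V \<beta> L \<phi>\<close> says that \<open>\<phi>\<close> is \<open>L\<close>-Lipschitz for the distance
  \<open>2 + \<beta> V x + \<beta> V y\<close> between distinct points, which is dual to the weighted total variation
  distance of Hairer and Mattingly.\<close>

definition weighted_osc :: "('a \<Rightarrow> real) \<Rightarrow> real \<Rightarrow> real \<Rightarrow> ('a \<Rightarrow> real) \<Rightarrow> bool" where
  "weighted_osc V \<beta> L \<phi> \<longleftrightarrow> (\<forall>u v. \<bar>\<phi> u - \<phi> v\<bar> \<le> L * (2 + \<beta> * V u + \<beta> * V v))"

lemma weighted_osc_nonneg: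
  assumes "weighted_osc V \<beta> L \<phi>" "0 \<le> \<beta>" "\<And>x. 0 \<le> V x"
  shows "0 \<le> L"
proof -
  have "0 \<le> L * (2 + \<beta> * V x + \<beta> * V x)" for x
    using assms(1) unfolding weighted_osc_def by (metis abs_ge_zero order_trans)
  moreover have "0 < 2 + \<beta> * V x + \<beta> * V x" for x
    using mult_nonneg_nonneg[OF assms(2) assms(3)[of x]] by linarith
  ultimately show ?thesis by (meson zero_le_mult_iff not_le)
qed

lemma weighted_osc_centering:
  assumes osc: "weighted_osc V \<beta> L \<phi>" and bdd: "bdd_above (range \<phi>)"
    and \<beta>: "0 \<le> \<beta>" and V: "\<And>x. 0 \<le> V x"
  obtains c where "\<And>y. \<bar>\<phi> y + c\<bar> \<le> L * (1 + \<beta> * V y)"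
proof -
  define W where "W y = L * (1 + \<beta> * V y)" for y
  have "0 \<le> L" by (rule weighted_osc_nonneg[OF osc \<beta> V])
  then have W: "0 \<le> W y" for y using \<beta> V[of y] by (simp add: W_def)
  define c where "c = - (SUP u. \<phi> u - W u)"
  have bddW: "bdd_above (range (\<lambda>u. \<phi> u - W u))"
    using bdd W by (auto simp: bdd_above_def) (smt (verit))
  have "\<bar>\<phi> y + c\<bar> \<le> L * (1 + \<beta> * V y)" for y
  proof -
    have "\<phi> y + c \<le> W y"
      using cSUP_upper[OF _ bddW, of y] by (simp add: c_def)
    moreover have "(SUP u. \<phi> u - W u) \<le> \<phi> y + W y"
      using osc by (intro cSUP_least) (auto simp: weighted_osc_def W_def algebra_simps abs_le_iff)
    ultimately show ?thesis by (simp add: c_def W_def abs_le_iff)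
  qed
  then show ?thesis by (rule that)
qed

lemma integral_mono_minorized:
  fixes F :: "'a \<Rightarrow> real"
  assumes minor: "scale_measure (ennreal \<alpha>) \<nu> \<le> M" and sets: "sets \<nu> = sets M" and "0 \<le> \<alpha>"
    and F: "\<And>y. 0 \<le> F y" "integrable M F" "integrable \<nu> F"
  shows "\<alpha> * (\<integral>y. F y \<partial>\<nu>) \<le> (\<integral>y. F y \<partial>M)"
proof -
  have Fm: "F \<in> borel_measurable \<nu>" using F(3) by auto
  have "ennreal (\<alpha> * (\<integral>y. F y \<partial>\<nu>)) = ennreal \<alpha> * (\<integral>\<^sup>+y. F y \<partial>\<nu>)"
    using F \<open>0 \<le> \<alpha>\<close> by (simp add: nn_integral_eq_integral ennreal_mult integral_nonneg_AE)
  also have "\<dots> = (\<integral>\<^sup>+y. F y \<partial>scale_measure (ennreal \<alpha>) \<nu>)"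
    using Fm by (simp add: nn_integral_scale_measure)
  also have "\<dots> \<le> (\<integral>\<^sup>+y. F y \<partial>M)"
    using minor sets by (intro nn_integral_mono_measure) auto
  also have "\<dots> = ennreal (\<integral>y. F y \<partial>M)"
    using F by (simp add: nn_integral_eq_integral)
  finally show ?thesis
    using F by (simp add: integral_nonneg_AE)
qed

lemma integrable_minorized:
  fixes F :: "'a \<Rightarrow> real"
  assumes minor: "scale_measure (ennreal \<alpha>) \<nu> \<le> M" and sets: "sets \<nu> = sets M" and "0 < \<alpha>"
    and F: "integrable M F"
  shows "integrable \<nu> F"
proof (rule integrableI_bounded)
  show Fm: "F \<in> borel_measurable \<nu>" using F measurable_cong_sets[OF sets] by auto
  have "ennreal \<alpha> * (\<integral>\<^sup>+y. norm (F y) \<partial>\<nu>) = (\<integral>\<^sup>+y. norm (F y) \<partial>scale_measure (ennreal \<alpha>) \<nu>)"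
    using Fm by (simp add: nn_integral_scale_measure)
  also have "\<dots> \<le> (\<integral>\<^sup>+y. norm (F y) \<partial>M)"
    using minor sets by (intro nn_integral_mono_measure) auto
  also have "\<dots> < \<infinity>" using F by (simp add: integrable_iff_bounded)
  finally show "(\<integral>\<^sup>+y. norm (F y) \<partial>\<nu>) < \<infinity>"
    using \<open>0 < \<alpha>\<close> by (auto simp: ennreal_mult_less_top)
qed

lemma abs_integral_diff_minorized_le:
  fixes \<phi> W :: "'a \<Rightarrow> real"
  assumes minor: "scale_measure (ennreal \<alpha>) \<nu> \<le> M" and sets: "sets \<nu> = sets M" and "0 \<le> \<alpha>"
    and W: "integrable M W" "integrable \<nu> W"
    and \<phi>: "\<phi> \<in> borel_measurable M" "\<And>y. \<bar>\<phi> y\<bar> \<le> W y"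
  shows "\<bar>(\<integral>y. \<phi> y \<partial>M) - \<alpha> * (\<integral>y. \<phi> y \<partial>\<nu>)\<bar> \<le> (\<integral>y. W y \<partial>M) - \<alpha> * (\<integral>y. W y \<partial>\<nu>)"
proof -
  have bound: "\<bar>\<phi> y\<bar> \<le> \<bar>W y\<bar>" for y
    using \<phi>(2)[of y] by linarith
  have \<phi>M: "integrable M \<phi>"
    using \<phi>(1) bound by (intro Bochner_Integration.integrable_bound[OF W(1)]) auto
  have \<phi>\<nu>: "integrable \<nu> \<phi>"
    using \<phi>(1) bound measurable_cong_sets[OF sets]
    by (intro Bochner_Integration.integrable_bound[OF W(2)]) auto
  have nonneg: "0 \<le> W y - \<phi> y" "0 \<le> W y + \<phi> y" for y
    using \<phi>(2)[of y] by (simp_all add: abs_le_iff)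
  have "\<alpha> * (\<integral>y. W y - \<phi> y \<partial>\<nu>) \<le> (\<integral>y. W y - \<phi> y \<partial>M)"
    by (intro integral_mono_minorized[OF minor sets \<open>0 \<le> \<alpha>\<close>]) (use nonneg \<phi>M \<phi>\<nu> W in auto)
  moreover have "\<alpha> * (\<integral>y. W y + \<phi> y \<partial>\<nu>) \<le> (\<integral>y. W y + \<phi> y \<partial>M)"
    by (intro integral_mono_minorized[OF minor sets \<open>0 \<le> \<alpha>\<close>]) (use nonneg \<phi>M \<phi>\<nu> W in auto)
  ultimately show ?thesis
    using \<phi>M \<phi>\<nu> W by (simp add: abs_le_iff algebra_simps)
qed

lemma harris_bound_large_V:
  fixes a a' v v' \<beta> \<gamma> K L R \<alpha>' :: real
  assumes "\<bar>a\<bar> \<le> L * (1 + \<beta> * (\<gamma> * v + K))" "\<bar>a'\<bar> \<le> L * (1 + \<beta> * (\<gamma> * v' + K))"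
    and "R \<le> v + v'" "0 \<le> L" "0 \<le> K" "\<gamma> < 1" "0 < \<beta>" "2 * (4 * K + 1) \<le> (1 - \<gamma>) * R"
    and "(1 + \<gamma>) / 2 \<le> \<alpha>'" "1 - \<beta> / 2 \<le> \<alpha>'"
  shows "\<bar>a - a'\<bar> \<le> \<alpha>' * L * (2 + \<beta> * v + \<beta> * v')"
proof -
  define S where "S = v + v'"
  have "0 < (1 - \<gamma>) * R" using assms by argo
  then have "0 \<le> R" using assms by (simp add: zero_less_mult_iff)
  have "(1 - \<gamma>) * R \<le> (1 - \<gamma>) * S"
    using assms by (intro mult_left_mono) (auto simp: S_def)
  with assms(8) have "2 * (4 * K + 1) \<le> (1 - \<gamma>) * S" by (rule order_trans)
  also have "\<dots> \<le> 2 * (\<alpha>' - \<gamma>) * S"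
    using assms \<open>0 \<le> R\<close> by (intro mult_right_mono) (auto simp: S_def)
  also have "\<dots> = 2 * ((\<alpha>' - \<gamma>) * S)" by simp
  finally have "4 * K + 1 \<le> (\<alpha>' - \<gamma>) * S" by argo
  then have "\<beta> * (4 * K + 1) \<le> \<beta> * ((\<alpha>' - \<gamma>) * S)"
    using assms by (intro mult_left_mono) auto
  moreover have "0 \<le> \<beta> * K" using assms by simp
  moreover have "\<alpha>' * (2 + \<beta> * S) - (2 + \<beta> * (\<gamma> * S + 2 * K))
      = 2 * (\<alpha>' - (1 - \<beta> / 2)) + (\<beta> * ((\<alpha>' - \<gamma>) * S) - \<beta> * (4 * K + 1)) + 2 * (\<beta> * K)"
    by (simp add: algebra_simps)
  ultimately have "2 + \<beta> * (\<gamma> * S + 2 * K) \<le> \<alpha>' * (2 + \<beta> * S)"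
    using assms(10) by argo
  from mult_left_mono[OF this \<open>0 \<le> L\<close>] show ?thesis
    using assms(1,2) by (simp add: S_def algebra_simps)
qed

lemma harris_bound_small_V:
  fixes a a' b v v' \<alpha> \<beta> \<gamma> K L R \<alpha>' :: real
  assumes "\<bar>a - \<alpha> * b\<bar> \<le> L * (1 - \<alpha> + \<beta> * (\<gamma> * v + K))" "\<bar>a' - \<alpha> * b\<bar> \<le> L * (1 - \<alpha> + \<beta> * (\<gamma> * v' + K))"
    and "0 \<le> v" "0 \<le> v'" "v + v' \<le> R" "0 \<le> L"
    and "0 \<le> \<gamma>" "0 < \<beta>" "\<alpha> \<le> 1" "\<beta> * (\<gamma> * R + 2 * K) \<le> \<alpha>" "1 - \<alpha> / 2 \<le> \<alpha>'"
  shows "\<bar>a - a'\<bar> \<le> \<alpha>' * L * (2 + \<beta> * v + \<beta> * v')"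
proof -
  have "\<beta> * (\<gamma> * (v + v') + 2 * K) \<le> \<beta> * (\<gamma> * R + 2 * K)"
    using assms by (intro mult_left_mono add_right_mono) auto
  then have "2 * (1 - \<alpha>) + \<beta> * (\<gamma> * (v + v') + 2 * K) \<le> \<alpha>' * 2"
    using assms by argo
  also have "\<dots> \<le> \<alpha>' * (2 + \<beta> * v + \<beta> * v')"
    using assms by (intro mult_left_mono) auto
  finally have "L * (2 * (1 - \<alpha>) + \<beta> * (\<gamma> * (v + v') + 2 * K)) \<le> L * (\<alpha>' * (2 + \<beta> * v + \<beta> * v'))"
    using \<open>0 \<le> L\<close> by (rule mult_left_mono)
  moreover have "\<bar>a - a'\<bar> \<le> L * (1 - \<alpha> + \<beta> * (\<gamma> * v + K)) + L * (1 - \<alpha> + \<beta> * (\<gamma> * v' + K))"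
    using assms(1,2) by linarith
  ultimately show ?thesis by (simp add: algebra_simps)
qed

lemma abs_integral_centered_le:
  fixes N :: "'a measure" and V \<psi> :: "'a \<Rightarrow> real"
  assumes "prob_space N" "integrable N V" and \<psi>: "\<psi> \<in> borel_measurable N" "\<And>y. \<bar>\<psi> y\<bar> \<le> L * (1 + \<beta> * V y)"
  shows "\<bar>\<integral>y. \<psi> y \<partial>N\<bar> \<le> L * (1 + \<beta> * (\<integral>y. V y \<partial>N))"
proof -
  interpret prob_space N by fact
  have W: "integrable N (\<lambda>y. L * (1 + \<beta> * V y))" using assms(2) by simp
  have "\<bar>\<psi> y\<bar> \<le> \<bar>L * (1 + \<beta> * V y)\<bar>" for y using \<psi>(2)[of y] by linarith
  then have "integrable N \<psi>"
    by (intro Bochner_Integration.integrable_bound[OF W \<psi>(1)]) simp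
  then have "\<bar>\<integral>y. \<psi> y \<partial>N\<bar> \<le> (\<integral>y. L * (1 + \<beta> * V y) \<partial>N)"
    by (intro order_trans[OF integral_abs_bound] integral_mono W) (simp_all add: \<psi>(2))
  also have "\<dots> = L * (1 + \<beta> * (\<integral>y. V y \<partial>N))"
    using assms(2) by (simp add: prob_space)
  finally show ?thesis .
qed

lemma abs_integral_centered_minorized_le:
  fixes N :: "'a measure" and V \<psi> :: "'a \<Rightarrow> real"
  assumes minor: "scale_measure (ennreal \<alpha>) \<nu> \<le> N" and sets: "sets \<nu> = sets N" and "0 < \<alpha>"
    and prob: "prob_space N" "prob_space \<nu>" and V: "\<And>x. 0 \<le> V x" "integrable N V"
    and \<psi>: "\<psi> \<in> borel_measurable N" "\<And>y. \<bar>\<psi> y\<bar> \<le> L * (1 + \<beta> * V y)" and "0 \<le> L" "0 \<le> \<beta>"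
  shows "\<bar>(\<integral>y. \<psi> y \<partial>N) - \<alpha> * (\<integral>y. \<psi> y \<partial>\<nu>)\<bar> \<le> L * (1 - \<alpha> + \<beta> * (\<integral>y. V y \<partial>N))"
proof -
  define W where "W = (\<lambda>y. L * (1 + \<beta> * V y))"
  have V\<nu>: "integrable \<nu> V" by (rule integrable_minorized[OF minor sets \<open>0 < \<alpha>\<close> V(2)])
  have W_int: "integrable M W" "(\<integral>y. W y \<partial>M) = L + L * \<beta> * (\<integral>y. V y \<partial>M)"
    if "prob_space M" "integrable M V" for M :: "'a measure"
  proof -
    interpret prob_space M by fact
    show "integrable M W" "(\<integral>y. W y \<partial>M) = L + L * \<beta> * (\<integral>y. V y \<partial>M)"
      using that(2) by (simp_all add: W_def prob_space distrib_left)
  qed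
  have "\<bar>\<psi> y\<bar> \<le> W y" for y using \<psi>(2) by (simp add: W_def)
  then have "\<bar>(\<integral>y. \<psi> y \<partial>N) - \<alpha> * (\<integral>y. \<psi> y \<partial>\<nu>)\<bar> \<le> (\<integral>y. W y \<partial>N) - \<alpha> * (\<integral>y. W y \<partial>\<nu>)"
    by (rule abs_integral_diff_minorized_le[OF minor sets less_imp_le[OF \<open>0 < \<alpha>\<close>]
          W_int(1)[OF prob(1) V(2)] W_int(1)[OF prob(2) V\<nu>] \<psi>(1)])
  moreover have "0 \<le> \<alpha> * (L * \<beta> * (\<integral>y. V y \<partial>\<nu>))"
    using \<open>0 < \<alpha>\<close> \<open>0 \<le> L\<close> \<open>0 \<le> \<beta>\<close> V(1) by (simp add: integral_nonneg_AE)
  ultimately show ?thesis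
    using W_int(2)[OF prob(1) V(2)] W_int(2)[OF prob(2) V\<nu>] by (simp add: algebra_simps)
qed

lemma harris_contraction_explicit:
  fixes Q :: "'a \<Rightarrow> 'a measure" and V \<phi> :: "'a \<Rightarrow> real"
  assumes Q: "\<And>x. prob_space (Q x)" "\<And>x. sets (Q x) = sets M"
    and V: "V \<in> borel_measurable M" "\<And>x. 0 \<le> V x" "\<And>x. integrable (Q x) V"
    and drift: "\<And>x. (\<integral>y. V y \<partial>Q x) \<le> \<gamma> * V x + K"
    and \<nu>: "prob_space \<nu>" "sets \<nu> = sets M"
    and minor: "\<And>x. V x \<le> R \<Longrightarrow> scale_measure (ennreal \<alpha>) \<nu> \<le> Q x"
    and params: "0 \<le> \<gamma>" "\<gamma> < 1" "0 \<le> K" "0 < \<alpha>" "\<alpha> \<le> 1" "0 < \<beta>"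
      "2 * (4 * K + 1) \<le> (1 - \<gamma>) * R" "\<beta> * (\<gamma> * R + 2 * K) \<le> \<alpha>"
      "(1 + \<gamma>) / 2 \<le> \<alpha>'" "1 - \<beta> / 2 \<le> \<alpha>'" "1 - \<alpha> / 2 \<le> \<alpha>'"
    and \<phi>: "\<phi> \<in> borel_measurable M" "bdd_above (range \<phi>)" "weighted_osc V \<beta> L \<phi>"
  shows "weighted_osc V \<beta> (\<alpha>' * L) (\<lambda>x. \<integral>y. \<phi> y \<partial>Q x)"
proof -
  \<comment> \<open>Only differences of integrals of \<open>\<phi>\<close> matter, so \<open>\<phi>\<close> may be shifted by a constant.\<close>
  obtain c where c: "\<And>y. \<bar>\<phi> y + c\<bar> \<le> L * (1 + \<beta> * V y)"
    using weighted_osc_centering[OF \<phi>(3,2) less_imp_le[OF params(6)] V(2)] by blast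
  have L: "0 \<le> L" using weighted_osc_nonneg[OF \<phi>(3) less_imp_le[OF params(6)] V(2)] .
  have \<psi>: "(\<lambda>y. \<phi> y + c) \<in> borel_measurable (Q z)" for z
    unfolding measurable_cong_sets[OF Q(2) refl] using \<phi>(1) by simp
  have drift': "L * \<beta> * (\<integral>y. V y \<partial>Q z) \<le> L * \<beta> * (\<gamma> * V z + K)" for z
    using drift[of z] L params by (intro mult_left_mono) auto
  have far: "\<bar>\<integral>y. \<phi> y + c \<partial>Q z\<bar> \<le> L * (1 + \<beta> * (\<gamma> * V z + K))" for z
    using abs_integral_centered_le[OF Q(1) V(3) \<psi> c, of z] drift'[of z] by (simp add: algebra_simps)
  have near: "\<bar>(\<integral>y. \<phi> y + c \<partial>Q z) - \<alpha> * (\<integral>y. \<phi> y + c \<partial>\<nu>)\<bar> \<le> L * (1 - \<alpha> + \<beta> * (\<gamma> * V z + K))"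
    if "V z \<le> R" for z
    using abs_integral_centered_minorized_le[OF minor[OF that] \<nu>(2)[folded Q(2)[of z]] params(4)
        Q(1) \<nu>(1) V(2,3) \<psi> c L less_imp_le[OF params(6)]] drift'[of z]
    by (simp add: algebra_simps)
  have shift: "(\<integral>y. \<phi> y \<partial>Q z) = (\<integral>y. \<phi> y + c \<partial>Q z) - c" for z
  proof -
    interpret prob_space "Q z" by (rule Q(1))
    have W: "integrable (Q z) (\<lambda>y. L * (1 + \<beta> * V y))" using V(3) by simp
    have "\<bar>\<phi> y + c\<bar> \<le> \<bar>L * (1 + \<beta> * V y)\<bar>" for y using c[of y] by linarith
    then have "integrable (Q z) (\<lambda>y. \<phi> y + c)"
      by (intro Bochner_Integration.integrable_bound[OF W \<psi>]) simp
    from Bochner_Integration.integrable_diff[OF this integrable_const[of c]] show ?thesis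
      by (simp add: prob_space)
  qed
  show ?thesis unfolding weighted_osc_def
  proof (intro allI)
    fix x x'
    have "\<bar>(\<integral>y. \<phi> y \<partial>Q x) - (\<integral>y. \<phi> y \<partial>Q x')\<bar> = \<bar>(\<integral>y. \<phi> y + c \<partial>Q x) - (\<integral>y. \<phi> y + c \<partial>Q x')\<bar>"
      by (simp add: shift)
    also have "\<dots> \<le> \<alpha>' * L * (2 + \<beta> * V x + \<beta> * V x')"
    proof (cases "R \<le> V x + V x'")
      case True
      then show ?thesis
        using far[of x] far[of x'] L params by (intro harris_bound_large_V[where R = R]) auto
    next
      case False
      then have "V x \<le> R" "V x' \<le> R" using V(2)[of x] V(2)[of x'] by linarith+
      then show ?thesis
        using near[of x] near[of x'] False V(2) L params
        by (intro harris_bound_small_V[where \<alpha> = \<alpha> and \<gamma> = \<gamma> and K = K and R = R]) auto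
    qed
    finally show "\<bar>(\<integral>y. \<phi> y \<partial>Q x) - (\<integral>y. \<phi> y \<partial>Q x')\<bar> \<le> \<alpha>' * L * (2 + \<beta> * V x + \<beta> * V x')" .
  qed
qed

lemma harris_contraction:
  fixes Q :: "'a \<Rightarrow> 'a measure" and V :: "'a \<Rightarrow> real"
  assumes Q: "\<And>x. prob_space (Q x)" "\<And>x. sets (Q x) = sets M"
    and V: "V \<in> borel_measurable M" "\<And>x. 0 \<le> V x" "\<And>x. integrable (Q x) V"
    and drift: "\<And>x. (\<integral>y. V y \<partial>Q x) \<le> \<gamma> * V x + K"
    and \<nu>: "prob_space \<nu>" "sets \<nu> = sets M"
    and minor: "\<And>x. V x \<le> R \<Longrightarrow> scale_measure (ennreal \<alpha>) \<nu> \<le> Q x"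
    and params: "0 \<le> \<gamma>" "\<gamma> < 1" "0 \<le> K" "0 < \<alpha>" "\<alpha> \<le> 1" "2 * (4 * K + 1) \<le> (1 - \<gamma>) * R"
  obtains \<beta> \<alpha>' where "0 < \<beta>" "0 < \<alpha>'" "\<alpha>' < 1"
    "\<And>\<phi> L. \<phi> \<in> borel_measurable M \<Longrightarrow> bdd_above (range \<phi>) \<Longrightarrow> weighted_osc V \<beta> L \<phi> \<Longrightarrow>
      weighted_osc V \<beta> (\<alpha>' * L) (\<lambda>x. \<integral>y. \<phi> y \<partial>Q x)"
proof -
  have "0 < (1 - \<gamma>) * R" using params by argo
  then have "0 \<le> R" using params by (simp add: zero_less_mult_iff)
  then have pos: "0 < \<gamma> * R + 2 * K + 1" using params by (simp add: add_nonneg_pos)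
  define \<beta> where "\<beta> = \<alpha> / (\<gamma> * R + 2 * K + 1)"
  define \<alpha>' where "\<alpha>' = max ((1 + \<gamma>) / 2) (max (1 - \<beta> / 2) (1 - \<alpha> / 2))"
  have \<beta>: "0 < \<beta>" using params pos by (simp add: \<beta>_def)
  have "\<beta> * (\<gamma> * R + 2 * K) \<le> \<beta> * (\<gamma> * R + 2 * K + 1)" using \<beta> by simp
  also have "\<dots> = \<alpha>" using pos by (simp add: \<beta>_def)
  finally have "\<beta> * (\<gamma> * R + 2 * K) \<le> \<alpha>" .
  then show ?thesis
    using that[of \<beta> \<alpha>'] harris_contraction_explicit[OF Q V drift \<nu> minor params(1-5) \<beta> params(6)] \<beta> params
    by (auto simp: \<alpha>'_def less_max_iff_disj)
qed

section \<open>Markov kernels on the plane\<close>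

definition unit_valued :: "('a::topological_space \<Rightarrow> real) \<Rightarrow> bool" where
  "unit_valued \<phi> \<longleftrightarrow> \<phi> \<in> borel_measurable borel \<and> (\<forall>x. 0 \<le> \<phi> x \<and> \<phi> x \<le> 1)"

lemma unit_valued_indicator: "A \<in> sets borel \<Longrightarrow> unit_valued (indicator A)"
  by (simp add: unit_valued_def)

lemma unit_valued_integrable:
  assumes "unit_valued \<phi>" "prob_space M" "sets M = sets borel"
  shows "integrable M \<phi>"
proof -
  interpret prob_space M by fact
  have "\<phi> \<in> borel_measurable M"
    unfolding measurable_cong_sets[OF assms(3) refl] using assms(1) by (simp add: unit_valued_def)
  then show ?thesis
    using assms(1) by (intro integrable_const_bound[where B = 1]) (auto simp: unit_valued_def)
qed

lemma weighted_osc_unit_valued: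
  assumes "unit_valued \<phi>" "0 \<le> \<beta>" "\<And>x. 0 \<le> V x"
  shows "weighted_osc V \<beta> (1 / 2) \<phi>"
  unfolding weighted_osc_def
proof (intro allI)
  fix u v
  have "0 \<le> \<phi> u \<and> \<phi> u \<le> 1" "0 \<le> \<phi> v \<and> \<phi> v \<le> 1"
    using assms(1) by (auto simp: unit_valued_def)
  then have "\<bar>\<phi> u - \<phi> v\<bar> \<le> 1" by (auto simp: abs_le_iff)
  moreover have "0 \<le> \<beta> * V u + \<beta> * V v" using assms(2,3) by simp
  ultimately show "\<bar>\<phi> u - \<phi> v\<bar> \<le> 1 / 2 * (2 + \<beta> * V u + \<beta> * V v)" by simp
qed

lemma tv_dist_le:
  assumes "\<And>A. A \<in> sets borel \<Longrightarrow> \<bar>measure M A - measure N A\<bar> \<le> c"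
  shows "tv_dist M N \<le> c"
  unfolding tv_dist_def using assms by (intro cSUP_least) auto

lemma tv_dist_nonneg:
  assumes "prob_space M" "prob_space N"
  shows "0 \<le> tv_dist M N"
proof -
  have "\<bar>measure M A - measure N A\<bar> \<le> 1" for A
    using prob_space.prob_le_1[OF assms(1), of A] prob_space.prob_le_1[OF assms(2), of A]
      measure_nonneg[of M A] measure_nonneg[of N A]
    by (smt (verit))
  then have "bdd_above ((\<lambda>A. \<bar>measure M A - measure N A\<bar>) ` sets borel)"
    by (intro bdd_aboveI[where M = 1]) auto
  from cSUP_upper[OF _ this, of "{}"] show ?thesis
    by (simp add: tv_dist_def)
qed

locale markov_kernel_R2 =
  fixes P :: "real \<times> real \<Rightarrow> (real \<times> real) measure"
  assumes P_measurable[measurable]: "P \<in> borel \<rightarrow>\<^sub>M prob_algebra borel"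
begin

lemma trans_iter_measurable[measurable]: "trans_iter P n \<in> borel \<rightarrow>\<^sub>M prob_algebra borel"
proof (induction n)
  case 0
  then show ?case by (simp add: measurable_return_prob_space[unfolded comp_def])
next
  case (Suc n)
  then show ?case by (simp add: measurable_bind_prob_space)
qed

lemma prob_space_trans_iter: "prob_space (trans_iter P n x)"
  using measurable_space[OF trans_iter_measurable, of x n] by (simp add: space_prob_algebra)

lemma sets_trans_iter[simp, measurable_cong]: "sets (trans_iter P n x) = sets borel"
  using measurable_space[OF trans_iter_measurable, of x n] by (simp add: space_prob_algebra)

lemma prob_space_P: "prob_space (P x)"
  using measurable_space[OF P_measurable, of x] by (simp add: space_prob_algebra)

lemma sets_P[simp, measurable_cong]: "sets (P x) = sets borel"
  using measurable_space[OF P_measurable, of x] by (simp add: space_prob_algebra)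

lemma nn_integral_P_measurable[measurable]:
  "F \<in> borel_measurable borel \<Longrightarrow> (\<lambda>z. \<integral>\<^sup>+y. F y \<partial>P z) \<in> borel_measurable borel"
  by (rule measurable_compose[OF measurable_prob_algebraD[OF P_measurable] nn_integral_measurable_subprob_algebra])

lemma nn_integral_trans_iter_Suc:
  assumes [measurable]: "F \<in> borel_measurable borel"
  shows "(\<integral>\<^sup>+y. F y \<partial>trans_iter P (Suc n) x) = (\<integral>\<^sup>+z. (\<integral>\<^sup>+y. F y \<partial>P z) \<partial>trans_iter P n x)"
proof -
  have "P \<in> trans_iter P n x \<rightarrow>\<^sub>M subprob_algebra borel"
    using measurable_prob_algebraD[OF P_measurable] by simp
  then show ?thesis by (simp add: nn_integral_bind[OF assms])
qed

definition kernel_op :: "(real \<times> real \<Rightarrow> real) \<Rightarrow> real \<times> real \<Rightarrow> real" where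
  "kernel_op \<phi> x = (\<integral>y. \<phi> y \<partial>P x)"

lemma unit_valued_kernel_op:
  assumes "unit_valued \<phi>"
  shows "unit_valued (kernel_op \<phi>)"
proof -
  have "kernel_op \<phi> \<in> borel_measurable borel"
    using assms measurable_prob_algebraD[OF P_measurable] unfolding kernel_op_def[abs_def] unit_valued_def
    by (intro measurable_compose[OF _ integral_measurable_subprob_algebra]) auto
  moreover have "0 \<le> kernel_op \<phi> x \<and> kernel_op \<phi> x \<le> 1" for x
  proof -
    interpret prob_space "P x" by (rule prob_space_P)
    have "integrable (P x) \<phi>" by (rule unit_valued_integrable[OF assms prob_space_P sets_P])
    then have "kernel_op \<phi> x \<le> (\<integral>y. 1 \<partial>P x)"
      using assms unfolding kernel_op_def by (intro integral_mono) (auto simp: unit_valued_def)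
    then show ?thesis
      using assms by (auto simp: kernel_op_def unit_valued_def prob_space intro!: integral_nonneg_AE)
  qed
  ultimately show ?thesis by (simp add: unit_valued_def)
qed

lemma unit_valued_kernel_op_funpow: "unit_valued \<phi> \<Longrightarrow> unit_valued ((kernel_op ^^ n) \<phi>)"
  by (induction n) (auto intro: unit_valued_kernel_op)

lemma integral_trans_iter:
  assumes "unit_valued \<phi>"
  shows "(\<integral>y. \<phi> y \<partial>trans_iter P n x) = (kernel_op ^^ n) \<phi> x"
  using assms
proof (induction n arbitrary: \<phi>)
  case 0
  then show ?case by (simp add: integral_return unit_valued_def)
next
  case (Suc n)
  have nn: "0 \<le> \<phi> y" "0 \<le> kernel_op \<phi> y" for y
    using Suc.prems unit_valued_kernel_op[OF Suc.prems] unfolding unit_valued_def by blast+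
  have meas[measurable]: "\<phi> \<in> borel_measurable borel" "kernel_op \<phi> \<in> borel_measurable borel"
    using Suc.prems unit_valued_kernel_op[OF Suc.prems] by (simp_all add: unit_valued_def)
  have "(\<integral>\<^sup>+y. \<phi> y \<partial>P z) = kernel_op \<phi> z" for z
    unfolding kernel_op_def
    by (rule nn_integral_eq_integral[OF unit_valued_integrable[OF Suc.prems prob_space_P sets_P]])
      (simp add: nn)
  then have "(\<integral>\<^sup>+y. \<phi> y \<partial>trans_iter P (Suc n) x) = (\<integral>\<^sup>+y. kernel_op \<phi> y \<partial>trans_iter P n x)"
    using nn_integral_trans_iter_Suc[of "\<lambda>y. ennreal (\<phi> y)" n x] by (simp del: trans_iter.simps)
  then have "(\<integral>y. \<phi> y \<partial>trans_iter P (Suc n) x) = (\<integral>y. kernel_op \<phi> y \<partial>trans_iter P n x)"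
    by (subst (1 2) integral_eq_nn_integral) (use nn in \<open>auto simp del: trans_iter.simps\<close>)
  also have "\<dots> = (kernel_op ^^ n) (kernel_op \<phi>) x"
    by (rule Suc.IH[OF unit_valued_kernel_op[OF Suc.prems]])
  finally show ?case by (simp add: funpow_Suc_right del: funpow.simps)
qed

lemma measure_trans_iter:
  "A \<in> sets borel \<Longrightarrow> measure (trans_iter P n x) A = (kernel_op ^^ n) (indicator A) x"
  using integral_trans_iter[OF unit_valued_indicator] by simp

end

section \<open>Geometric ergodicity from drift and small sublevel sets\<close>

lemma tendsto_power_div_zero:
  fixes q :: real
  assumes "0 \<le> q" "q < 1" "0 < m"
  shows "(\<lambda>n. q ^ (n div m)) \<longlonglongrightarrow> 0"
proof -
  have "filterlim (\<lambda>n. n div m) at_top sequentially"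
    unfolding filterlim_at_top eventually_sequentially
  proof (intro allI exI impI)
    fix Z n :: nat assume "Z * m \<le> n"
    then show "Z \<le> n div m" using div_le_mono[of "Z * m" n m] \<open>0 < m\<close> by simp
  qed
  with LIMSEQ_power_zero[of q] assms show ?thesis
    by (auto intro: filterlim_compose)
qed

lemma tendsto_power_mult_power_div_zero:
  fixes \<rho> q :: real
  assumes "0 < m" "1 \<le> \<rho>" "0 \<le> q" "\<rho> ^ m * q < 1"
  shows "(\<lambda>n. \<rho> ^ n * q ^ (n div m)) \<longlonglongrightarrow> 0"
proof (rule tendsto_sandwich[OF _ _ tendsto_const])
  have "\<rho> ^ n * q ^ (n div m) \<le> \<rho> ^ m * (\<rho> ^ m * q) ^ (n div m)" for n
  proof -
    have "\<rho> ^ n = \<rho> ^ (n mod m) * (\<rho> ^ m) ^ (n div m)"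
      by (metis div_mult_mod_eq power_add power_mult add.commute mult.commute)
    then have "\<rho> ^ n * q ^ (n div m) = \<rho> ^ (n mod m) * (\<rho> ^ m * q) ^ (n div m)"
      by (simp add: power_mult_distrib)
    also have "\<dots> \<le> \<rho> ^ m * (\<rho> ^ m * q) ^ (n div m)"
      using assms by (intro mult_right_mono power_increasing) auto
    finally show ?thesis .
  qed
  then show "\<forall>\<^sub>F n in sequentially. \<rho> ^ n * q ^ (n div m) \<le> \<rho> ^ m * (\<rho> ^ m * q) ^ (n div m)"
    by simp
  show "\<forall>\<^sub>F n in sequentially. 0 \<le> \<rho> ^ n * q ^ (n div m)"
    using assms by simp
  show "(\<lambda>n. \<rho> ^ m * (\<rho> ^ m * q) ^ (n div m)) \<longlonglongrightarrow> 0"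
    using assms by (intro tendsto_mult_right_zero tendsto_power_div_zero) auto
qed

lemma uniformly_cauchy_limit_bound:
  fixes a r :: "nat \<Rightarrow> real"
  assumes cauchy: "\<And>n k. \<bar>a (k + n) - a n\<bar> \<le> r n" and r: "r \<longlonglongrightarrow> 0"
  shows "a \<longlonglongrightarrow> lim a" "\<bar>a n - lim a\<bar> \<le> r n"
proof -
  have "Cauchy a"
  proof (rule CauchyI)
    fix e :: real assume "0 < e"
    then obtain N where N: "\<bar>r N\<bar> < e / 2"
      using LIMSEQ_D[OF r, of "e / 2"] by auto
    have "\<bar>a n - a N\<bar> \<le> r N" if "N \<le> n" for n
      using cauchy[of "n - N" N] that by simp
    then have "norm (a m - a n) < e" if "N \<le> m" "N \<le> n" for m n
      using N that[THEN \<open>\<And>n. N \<le> n \<Longrightarrow> \<bar>a n - a N\<bar> \<le> r N\<close>] by simp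
    then show "\<exists>M. \<forall>m\<ge>M. \<forall>n\<ge>M. norm (a m - a n) < e" by blast
  qed
  then show conv: "a \<longlonglongrightarrow> lim a"
    by (simp add: Cauchy_convergent_iff convergent_LIMSEQ_iff)
  have "(\<lambda>k. \<bar>a n - a (k + n)\<bar>) \<longlonglongrightarrow> \<bar>a n - lim a\<bar>"
    by (intro tendsto_intros LIMSEQ_ignore_initial_segment[OF conv, of n, simplified add.commute])
  then show "\<bar>a n - lim a\<bar> \<le> r n"
    by (rule tendsto_upperbound) (use cauchy in \<open>auto simp: abs_minus_commute\<close>)
qed

lemma setwise_limit_continuous_at_empty:
  fixes M :: "nat \<Rightarrow> 'a measure" and A :: "nat \<Rightarrow> 'a set"
  assumes prob: "\<And>n. prob_space (M n)" and sets: "\<And>n. sets (M n) = sets N"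
    and unif: "\<And>n A. A \<in> sets N \<Longrightarrow> \<bar>measure (M n) A - \<mu> A\<bar> \<le> r n" and r: "r \<longlonglongrightarrow> 0"
    and nonneg: "\<And>A. A \<in> sets N \<Longrightarrow> 0 \<le> \<mu> A"
    and A: "range A \<subseteq> sets N" "decseq A" "(\<Inter>i. A i) = {}"
  shows "(\<lambda>i. \<mu> (A i)) \<longlonglongrightarrow> 0"
proof (rule LIMSEQ_I)
  fix e :: real assume "0 < e"
  then obtain n where n: "\<bar>r n\<bar> < e / 2" using LIMSEQ_D[OF r, of "e / 2"] by auto
  have "(\<lambda>i. measure (M n) (A i)) \<longlonglongrightarrow> measure (M n) (\<Inter>i. A i)"
    using A sets by (intro finite_measure.finite_Lim_measure_decseq prob_space.finite_measure prob) auto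
  with LIMSEQ_D[of _ 0 "e / 2"] \<open>0 < e\<close> A(3)
  obtain I where I: "\<And>i. I \<le> i \<Longrightarrow> measure (M n) (A i) < e / 2"
    by fastforce
  have "\<bar>\<mu> (A i)\<bar> < e" if "I \<le> i" for i
  proof -
    have Ai: "A i \<in> sets N" using A(1) by auto
    have "\<mu> (A i) \<le> measure (M n) (A i) + r n" using unif[OF Ai, of n] by (simp add: abs_le_iff)
    then show ?thesis using I[OF that] n nonneg[OF Ai] by linarith
  qed
  then show "\<exists>I. \<forall>i\<ge>I. norm (\<mu> (A i) - 0) < e" by auto
qed

lemma prob_space_setwise_limit:
  fixes M :: "nat \<Rightarrow> 'a measure"
  assumes prob: "\<And>n. prob_space (M n)" and sets: "\<And>n. sets (M n) = sets N"
    and conv: "\<And>A. A \<in> sets N \<Longrightarrow> (\<lambda>n. measure (M n) A) \<longlonglongrightarrow> \<mu> A"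
    and unif: "\<And>n A. A \<in> sets N \<Longrightarrow> \<bar>measure (M n) A - \<mu> A\<bar> \<le> r n" and r: "r \<longlonglongrightarrow> 0"
  shows "prob_space (measure_of (space N) (sets N) \<mu>)"
    and "\<And>A. A \<in> sets N \<Longrightarrow> measure (measure_of (space N) (sets N) \<mu>) A = \<mu> A"
proof -
  have space: "space (M n) = space N" for n using sets_eq_imp_space_eq[OF sets] .
  have nonneg: "0 \<le> \<mu> A" if "A \<in> sets N" for A
    by (rule LIMSEQ_le_const[OF conv[OF that]]) simp
  have add: "\<mu> (A \<union> B) = \<mu> A + \<mu> B" if "A \<in> sets N" "B \<in> sets N" "A \<inter> B = {}" for A B
  proof (rule LIMSEQ_unique[OF conv])
    have "measure (M n) (A \<union> B) = measure (M n) A + measure (M n) B" for n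
      using that sets by (intro finite_measure.finite_measure_Union prob_space.finite_measure prob) auto
    then show "(\<lambda>n. measure (M n) (A \<union> B)) \<longlonglongrightarrow> \<mu> A + \<mu> B"
      using that by (simp add: tendsto_add conv)
  qed (use that in auto)
  have cont: "(\<lambda>i. \<mu> (A i)) \<longlonglongrightarrow> 0"
    if "range A \<subseteq> sets N" "decseq A" "(\<Inter>i. A i) = {}" for A :: "nat \<Rightarrow> 'a set"
    by (rule setwise_limit_continuous_at_empty[OF prob sets unif r nonneg that])
  have pos: "positive (sets N) (\<lambda>A. ennreal (\<mu> A))"
    using conv[of "{}"] by (simp add: positive_def LIMSEQ_const_iff)
  have ca: "countably_additive (sets N) (\<lambda>A. ennreal (\<mu> A))"
  proof (rule sets.empty_continuous_imp_countably_additive[OF pos])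
    show "additive (sets N) (\<lambda>A. ennreal (\<mu> A))"
      using add nonneg by (auto simp: additive_def ennreal_plus)
  qed (use cont in \<open>auto intro: tendsto_ennrealI[of _ 0, simplified]\<close>)
  have emeasure: "emeasure (measure_of (space N) (sets N) \<mu>) A = \<mu> A" if "A \<in> sets N" for A
    using emeasure_measure_of_sigma[OF sets.sigma_algebra_axioms pos ca that] by simp
  show "\<And>A. A \<in> sets N \<Longrightarrow> measure (measure_of (space N) (sets N) \<mu>) A = \<mu> A"
    using emeasure nonneg by (simp add: measure_def)
  show "prob_space (measure_of (space N) (sets N) \<mu>)"
  proof (intro prob_spaceI)
    have "measure (M n) (space N) = 1" for n
      using prob_space.prob_space[OF prob, of n] space[of n] by simp
    then have "\<mu> (space N) = 1" using conv[of "space N"] by (simp add: LIMSEQ_const_iff)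
    then show "emeasure (measure_of (space N) (sets N) \<mu>) (space (measure_of (space N) (sets N) \<mu>)) = 1"
      using emeasure[of "space N"] by simp
  qed
qed

lemma geometrically_ergodicI:
  fixes P :: "real \<times> real \<Rightarrow> (real \<times> real) measure" and \<pi> :: "(real \<times> real) measure"
  assumes \<pi>: "prob_space \<pi>" "sets \<pi> = sets borel"
    and P: "\<And>t x. prob_space (trans_iter P t x)"
    and rate: "\<And>t x. tv_dist (trans_iter P t x) \<pi> \<le> q ^ (t div m) * C x"
    and "0 < m" "0 \<le> q" "q < 1"
  shows "geometrically_ergodic P"
  unfolding geometrically_ergodic_def
proof (intro exI conjI allI)
  define \<rho> where "\<rho> = root m (2 / (1 + q))"
  have "1 < 2 / (1 + q)" using assms by simp
  then show "1 < \<rho>" using \<open>0 < m\<close> by (simp add: \<rho>_def)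
  have "\<rho> ^ m * q = 2 * q / (1 + q)" using \<open>0 < m\<close> \<open>0 \<le> q\<close> by (simp add: \<rho>_def)
  also have "\<dots> < 1" using assms by simp
  finally have "\<rho> ^ m * q < 1" .
  fix x
  show "(\<lambda>t. \<rho> ^ t * tv_dist (trans_iter P t x) \<pi>) \<longlonglongrightarrow> 0"
  proof (rule tendsto_sandwich[OF _ _ tendsto_const])
    show "\<forall>\<^sub>F t in sequentially. 0 \<le> \<rho> ^ t * tv_dist (trans_iter P t x) \<pi>"
      using \<open>1 < \<rho>\<close> tv_dist_nonneg[OF P \<pi>(1)] by simp
    show "\<forall>\<^sub>F t in sequentially. \<rho> ^ t * tv_dist (trans_iter P t x) \<pi> \<le> \<rho> ^ t * q ^ (t div m) * C x"
      using \<open>1 < \<rho>\<close> rate by (simp add: mult.assoc mult_left_mono)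
    show "(\<lambda>t. \<rho> ^ t * q ^ (t div m) * C x) \<longlonglongrightarrow> 0"
      using \<open>\<rho> ^ m * q < 1\<close> \<open>1 < \<rho>\<close> assms
      by (intro tendsto_mult_left_zero tendsto_power_mult_power_div_zero) auto
  qed
qed (use \<pi> in auto)

locale drift_kernel = markov_kernel_R2 +
  fixes V :: "real \<times> real \<Rightarrow> real" and \<gamma> K :: real
  assumes V_measurable[measurable]: "V \<in> borel_measurable borel"
    and V_nonneg: "\<And>x. 0 \<le> V x"
    and drift: "\<And>x. (\<integral>\<^sup>+y. V y \<partial>P x) \<le> ennreal (\<gamma> * V x + K)"
    and \<gamma>_nonneg: "0 \<le> \<gamma>" and \<gamma>_less_1: "\<gamma> < 1" and K_nonneg: "0 \<le> K"
begin

lemma asymptotic_drift_bound_nonneg: "0 \<le> K / (1 - \<gamma>)"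
  using K_nonneg \<gamma>_less_1 by simp

lemma nn_integral_V_trans_iter:
  "(\<integral>\<^sup>+y. V y \<partial>trans_iter P n x) \<le> ennreal (\<gamma> ^ n * V x + K / (1 - \<gamma>))"
proof (induction n)
  case 0
  have "0 \<le> K / (1 - \<gamma>)" using K_nonneg \<gamma>_less_1 by simp
  then show ?case by (simp add: nn_integral_return V_nonneg ennreal_leI)
next
  case (Suc n)
  interpret prob_space "trans_iter P n x" by (rule prob_space_trans_iter)
  have nonneg: "0 \<le> \<gamma> ^ n * V x + K / (1 - \<gamma>)"
    using \<gamma>_nonneg \<gamma>_less_1 K_nonneg V_nonneg by simp
  have "(\<integral>\<^sup>+y. V y \<partial>trans_iter P (Suc n) x) = (\<integral>\<^sup>+z. (\<integral>\<^sup>+y. V y \<partial>P z) \<partial>trans_iter P n x)"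
    by (rule nn_integral_trans_iter_Suc) simp
  also have "\<dots> \<le> (\<integral>\<^sup>+z. ennreal \<gamma> * ennreal (V z) + ennreal K \<partial>trans_iter P n x)"
  proof (rule nn_integral_mono)
    fix z
    have "ennreal (\<gamma> * V z + K) = ennreal \<gamma> * ennreal (V z) + ennreal K"
      using \<gamma>_nonneg K_nonneg V_nonneg[of z] by (simp add: ennreal_plus ennreal_mult)
    then show "(\<integral>\<^sup>+y. V y \<partial>P z) \<le> ennreal \<gamma> * ennreal (V z) + ennreal K"
      using drift[of z] by simp
  qed
  also have "\<dots> = ennreal \<gamma> * (\<integral>\<^sup>+z. V z \<partial>trans_iter P n x) + ennreal K"
    by (simp add: nn_integral_add nn_integral_cmult emeasure_space_1)
  also have "\<dots> \<le> ennreal \<gamma> * ennreal (\<gamma> ^ n * V x + K / (1 - \<gamma>)) + ennreal K"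
    by (intro add_right_mono mult_left_mono Suc.IH) auto
  also have "\<dots> = ennreal (\<gamma> * (\<gamma> ^ n * V x + K / (1 - \<gamma>)) + K)"
    using nonneg \<gamma>_nonneg K_nonneg by (simp add: ennreal_plus ennreal_mult)
  also have "\<gamma> * (\<gamma> ^ n * V x + K / (1 - \<gamma>)) + K = \<gamma> ^ Suc n * V x + K / (1 - \<gamma>)"
    using \<gamma>_less_1 by (simp add: field_simps)
  finally show ?case .
qed

lemma integrable_V_trans_iter: "integrable (trans_iter P n x) V"
proof (rule integrableI_bounded)
  show "(\<integral>\<^sup>+y. norm (V y) \<partial>trans_iter P n x) < \<infinity>"
    using nn_integral_V_trans_iter[of n x] V_nonneg by (simp add: le_less_trans)
qed simp

lemma integral_V_trans_iter: "(\<integral>y. V y \<partial>trans_iter P n x) \<le> \<gamma> ^ n * V x + K / (1 - \<gamma>)"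
proof -
  have "0 \<le> \<gamma> ^ n * V x + K / (1 - \<gamma>)"
    using \<gamma>_nonneg \<gamma>_less_1 K_nonneg V_nonneg by simp
  then show ?thesis
    using nn_integral_V_trans_iter[of n x] V_nonneg
    by (simp add: integral_eq_nn_integral enn2real_leI)
qed

end

locale harris_kernel = drift_kernel +
  fixes m :: nat and \<beta> \<alpha>' :: real
  assumes m_pos: "0 < m" and \<beta>_pos: "0 < \<beta>" and \<alpha>'_pos: "0 < \<alpha>'" and \<alpha>'_less_1: "\<alpha>' < 1"
    and contraction: "\<And>\<phi> L. unit_valued \<phi> \<Longrightarrow> weighted_osc V \<beta> L \<phi> \<Longrightarrow>
      weighted_osc V \<beta> (\<alpha>' * L) ((kernel_op ^^ m) \<phi>)"
begin

lemma weighted_osc_kernel_op_funpow: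
  assumes "unit_valued \<phi>"
  shows "weighted_osc V \<beta> (\<alpha>' ^ (n div m) / 2) ((kernel_op ^^ n) \<phi>)"
proof -
  define \<psi> where "\<psi> = (kernel_op ^^ (n mod m)) \<phi>"
  have \<psi>: "unit_valued \<psi>" unfolding \<psi>_def by (rule unit_valued_kernel_op_funpow[OF assms])
  have "weighted_osc V \<beta> (\<alpha>' ^ j / 2) ((kernel_op ^^ (m * j)) \<psi>)" for j
  proof (induction j)
    case 0
    then show ?case using weighted_osc_unit_valued[OF \<psi>] \<beta>_pos V_nonneg by simp
  next
    case (Suc j)
    have "weighted_osc V \<beta> (\<alpha>' * (\<alpha>' ^ j / 2)) ((kernel_op ^^ m) ((kernel_op ^^ (m * j)) \<psi>))"
      by (rule contraction[OF unit_valued_kernel_op_funpow[OF \<psi>] Suc.IH])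
    then show ?case by (simp add: funpow_add)
  qed
  moreover have "(kernel_op ^^ n) \<phi> = (kernel_op ^^ (m * (n div m))) \<psi>"
    unfolding \<psi>_def by (metis comp_apply funpow_add div_mult_mod_eq mult.commute)
  ultimately show ?thesis by simp
qed

lemma measure_trans_iter_diff:
  assumes "A \<in> sets borel"
  shows "\<bar>measure (trans_iter P n x) A - measure (trans_iter P n y) A\<bar>
    \<le> \<alpha>' ^ (n div m) * (1 + \<beta> * (V x + V y) / 2)"
proof -
  have "\<bar>(kernel_op ^^ n) (indicator A) x - (kernel_op ^^ n) (indicator A) y\<bar>
      \<le> \<alpha>' ^ (n div m) / 2 * (2 + \<beta> * V x + \<beta> * V y)"
    using weighted_osc_kernel_op_funpow[OF unit_valued_indicator[OF assms], of n]
    unfolding weighted_osc_def by blast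
  then show ?thesis by (simp add: measure_trans_iter[OF assms] algebra_simps)
qed

definition limit_bound :: "real \<times> real \<Rightarrow> real" where
  "limit_bound x = 1 + \<beta> * (V x + K / (1 - \<gamma>))"

lemma measure_trans_iter_cauchy:
  assumes A: "A \<in> sets borel"
  shows "\<bar>measure (trans_iter P (k + n) x) A - measure (trans_iter P n x) A\<bar> \<le> \<alpha>' ^ (n div m) * limit_bound x"
proof -
  interpret prob_space "trans_iter P k x" by (rule prob_space_trans_iter)
  define a where "a = (kernel_op ^^ n) (indicator A)"
  have a: "unit_valued a" unfolding a_def by (rule unit_valued_kernel_op_funpow[OF unit_valued_indicator[OF A]])
  have int_a: "integrable (trans_iter P k x) a" by (rule unit_valued_integrable[OF a prob_space_trans_iter sets_trans_iter])
  have "measure (trans_iter P (k + n) x) A - measure (trans_iter P n x) A = (\<integral>y. a y - a x \<partial>trans_iter P k x)"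
    using integral_trans_iter[OF a, of k x] int_a
    by (simp add: measure_trans_iter[OF A] a_def funpow_add prob_space)
  also have "\<bar>\<dots>\<bar> \<le> (\<integral>y. \<alpha>' ^ (n div m) / 2 * (2 + \<beta> * V y + \<beta> * V x) \<partial>trans_iter P k x)"
  proof (intro order_trans[OF integral_abs_bound] integral_mono)
    show "\<bar>a y - a x\<bar> \<le> \<alpha>' ^ (n div m) / 2 * (2 + \<beta> * V y + \<beta> * V x)" for y
      using weighted_osc_kernel_op_funpow[OF unit_valued_indicator[OF A], of n]
      unfolding weighted_osc_def a_def by blast
  qed (use int_a integrable_V_trans_iter in auto)
  also have "\<dots> = \<alpha>' ^ (n div m) * (1 + \<beta> * ((\<integral>y. V y \<partial>trans_iter P k x) + V x) / 2)"
    using integrable_V_trans_iter by (simp add: prob_space algebra_simps)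
  also have "\<dots> \<le> \<alpha>' ^ (n div m) * limit_bound x"
  proof (intro mult_left_mono)
    define c where "c = K / (1 - \<gamma>)"
    have "\<gamma> ^ k * V x \<le> V x"
      using \<gamma>_nonneg \<gamma>_less_1 V_nonneg by (simp add: mult_left_le_one_le power_le_one)
    then have "(\<integral>y. V y \<partial>trans_iter P k x) + V x \<le> 2 * (V x + c)"
      using integral_V_trans_iter[of k x] asymptotic_drift_bound_nonneg unfolding c_def by argo
    then have "\<beta> * ((\<integral>y. V y \<partial>trans_iter P k x) + V x) \<le> \<beta> * (2 * (V x + c))"
      using \<beta>_pos by (intro mult_left_mono) auto
    then show "1 + \<beta> * ((\<integral>y. V y \<partial>trans_iter P k x) + V x) / 2 \<le> limit_bound x"
      unfolding limit_bound_def c_def[symmetric] by (simp add: algebra_simps)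
  qed (use \<alpha>'_pos in simp)
  finally show ?thesis .
qed

lemma limit_measure:
  obtains \<pi> where "prob_space \<pi>" "sets \<pi> = sets borel"
    "\<And>n x A. A \<in> sets borel \<Longrightarrow> \<bar>measure (trans_iter P n x) A - measure \<pi> A\<bar>
       \<le> \<alpha>' ^ (n div m) * (1 + \<beta> * (V x + V (0, 0)) / 2 + limit_bound (0, 0))"
proof -
  define \<mu> where "\<mu> A = lim (\<lambda>n. measure (trans_iter P n (0, 0)) A)" for A
  define r where "r n = \<alpha>' ^ (n div m) * limit_bound (0, 0)" for n
  have r: "r \<longlonglongrightarrow> 0"
    unfolding r_def using \<alpha>'_pos \<alpha>'_less_1 m_pos by (intro tendsto_mult_left_zero tendsto_power_div_zero) auto
  have limit: "(\<lambda>n. measure (trans_iter P n (0, 0)) A) \<longlonglongrightarrow> \<mu> A"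
    "\<bar>measure (trans_iter P n (0, 0)) A - \<mu> A\<bar> \<le> r n" if A: "A \<in> sets borel" for A n
  proof -
    have "\<bar>measure (trans_iter P (k + n) (0, 0)) A - measure (trans_iter P n (0, 0)) A\<bar> \<le> r n" for n k
      unfolding r_def by (rule measure_trans_iter_cauchy[OF A])
    from uniformly_cauchy_limit_bound[OF this r] show
      "(\<lambda>n. measure (trans_iter P n (0, 0)) A) \<longlonglongrightarrow> \<mu> A"
      "\<bar>measure (trans_iter P n (0, 0)) A - \<mu> A\<bar> \<le> r n"
      unfolding \<mu>_def by auto
  qed
  define \<pi> where "\<pi> = measure_of (space borel) (sets borel) \<mu>"
  have \<pi>: "prob_space \<pi>" "\<And>A. A \<in> sets borel \<Longrightarrow> measure \<pi> A = \<mu> A"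
    using prob_space_setwise_limit[of "\<lambda>n. trans_iter P n (0, 0)" borel \<mu> r] prob_space_trans_iter limit r
    by (auto simp: \<pi>_def)
  show ?thesis
  proof (rule that[OF \<pi>(1)])
    show "sets \<pi> = sets borel" unfolding \<pi>_def by (rule sets.sets_measure_of_eq)
    fix n x and A :: "(real \<times> real) set" assume A: "A \<in> sets borel"
    show "\<bar>measure (trans_iter P n x) A - measure \<pi> A\<bar>
       \<le> \<alpha>' ^ (n div m) * (1 + \<beta> * (V x + V (0, 0)) / 2 + limit_bound (0, 0))"
      using measure_trans_iter_diff[OF A, of n x "(0, 0)"] limit(2)[OF A, of n, folded \<mu>_def]
        \<pi>(2)[OF A] by (simp add: r_def algebra_simps)
  qed
qed

theorem geometrically_ergodic: "geometrically_ergodic P"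
proof -
  obtain \<pi> where \<pi>: "prob_space \<pi>" "sets \<pi> = sets borel"
    and bound: "\<And>n x A. A \<in> sets borel \<Longrightarrow> \<bar>measure (trans_iter P n x) A - measure \<pi> A\<bar>
       \<le> \<alpha>' ^ (n div m) * (1 + \<beta> * (V x + V (0, 0)) / 2 + limit_bound (0, 0))"
    using limit_measure by blast
  show ?thesis
    using \<alpha>'_pos \<alpha>'_less_1 m_pos
    by (intro geometrically_ergodicI[OF \<pi> prob_space_trans_iter tv_dist_le[OF bound]]) auto
qed

end

theorem (in drift_kernel) geometrically_ergodic_if_sublevel_sets_small:
  assumes m: "0 < m"
    and small: "\<And>R. \<exists>\<alpha> \<nu>. 0 < \<alpha> \<and> \<alpha> \<le> 1 \<and> prob_space \<nu> \<and> sets \<nu> = sets borel \<and>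
      (\<forall>x. V x \<le> R \<longrightarrow> scale_measure (ennreal \<alpha>) \<nu> \<le> trans_iter P m x)"
  shows "geometrically_ergodic P"
proof -
  have \<gamma>m: "0 \<le> \<gamma> ^ m" "\<gamma> ^ m < 1"
    using \<gamma>_nonneg \<gamma>_less_1 m by (simp_all add: power_less_one_iff)
  define R where "R = 2 * (4 * (K / (1 - \<gamma>)) + 1) / (1 - \<gamma> ^ m)"
  have R: "2 * (4 * (K / (1 - \<gamma>)) + 1) \<le> (1 - \<gamma> ^ m) * R"
    using \<gamma>m by (simp add: R_def)
  obtain \<alpha> \<nu> where \<alpha>: "0 < \<alpha>" "\<alpha> \<le> 1" and \<nu>: "prob_space \<nu>" "sets \<nu> = sets borel"
    and minor: "\<And>x. V x \<le> R \<Longrightarrow> scale_measure (ennreal \<alpha>) \<nu> \<le> trans_iter P m x"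
    using small[of R] by blast
  obtain \<beta> \<alpha>' where params: "0 < \<beta>" "0 < \<alpha>'" "\<alpha>' < 1"
    and contraction: "\<And>\<phi> L. \<phi> \<in> borel_measurable borel \<Longrightarrow> bdd_above (range \<phi>) \<Longrightarrow>
      weighted_osc V \<beta> L \<phi> \<Longrightarrow> weighted_osc V \<beta> (\<alpha>' * L) (\<lambda>x. \<integral>y. \<phi> y \<partial>trans_iter P m x)"
    using harris_contraction[OF prob_space_trans_iter sets_trans_iter V_measurable V_nonneg
        integrable_V_trans_iter integral_V_trans_iter \<nu> minor \<gamma>m(1,2) asymptotic_drift_bound_nonneg \<alpha> R]
    by blast
  interpret harris_kernel P V \<gamma> K m \<beta> \<alpha>'
  proof (rule harris_kernel.intro[OF drift_kernel_axioms],
      unfold_locales)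
    fix \<phi> L assume \<phi>: "unit_valued \<phi>" "weighted_osc V \<beta> L \<phi>"
    have "bdd_above (range \<phi>)" using \<phi>(1) by (auto simp: unit_valued_def bdd_above_def)
    then have "weighted_osc V \<beta> (\<alpha>' * L) (\<lambda>x. \<integral>y. \<phi> y \<partial>trans_iter P m x)"
      using \<phi> by (intro contraction) (auto simp: unit_valued_def)
    moreover have "(kernel_op ^^ m) \<phi> = (\<lambda>x. \<integral>y. \<phi> y \<partial>trans_iter P m x)"
      using integral_trans_iter[OF \<phi>(1)] by auto
    ultimately show "weighted_osc V \<beta> (\<alpha>' * L) ((kernel_op ^^ m) \<phi>)" by simp
  qed (use m params in auto)
  show ?thesis by (rule geometrically_ergodic)
qed

section \<open>A scalar recursion driven by noise with a positive density\<close>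

lemma lsc_real_reflect: "lsc_real f \<Longrightarrow> lsc_real (\<lambda>x. f (- x))"
proof -
  assume "lsc_real f"
  have "{x. a < f (- x)} = uminus ` {x. a < f x}" for a
    by (auto intro: image_eqI[of _ _ "- _"])
  then show "lsc_real (\<lambda>x. f (- x))"
    using \<open>lsc_real f\<close> by (simp add: lsc_real_def open_negations)
qed

lemma lsc_real_pos_bounded_below:
  assumes lsc: "lsc_real f" and pos: "\<And>x. 0 < f x"
  shows "\<exists>m>0. \<forall>x\<in>{a..b}. m \<le> f x"
proof -
  define U where "U n = {x. 1 / real (Suc n) < f x}" for n
  have U_open: "open (U n)" for n using lsc unfolding lsc_real_def U_def by blast
  have U_cover: "{a..b} \<subseteq> (\<Union>n\<in>UNIV. U n)"
  proof
    fix x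
    obtain n where "1 / real (Suc n) < f x" using pos[of x] by (metis nat_approx_posE)
    then show "x \<in> (\<Union>n\<in>UNIV. U n)" by (auto simp: U_def)
  qed
  obtain C where C: "C \<subseteq> UNIV" "finite C" "{a..b} \<subseteq> (\<Union>n\<in>C. U n)"
    using compactE_image[OF compact_Icc U_open U_cover] by blast
  define N where "N = Max (insert 0 C)"
  have "U n \<subseteq> U N" if "n \<in> C" for n
  proof -
    have "n \<le> N" unfolding N_def using C(2) that by simp
    then have "1 / real (Suc N) \<le> 1 / real (Suc n)" by (simp add: frac_le)
    then show ?thesis unfolding U_def by auto
  qed
  have "1 / real (Suc N) \<le> f x" if x: "x \<in> {a..b}" for x
  proof -
    obtain n where "n \<in> C" "x \<in> U n" using C(3) x by blast
    then have "x \<in> U N" using \<open>\<And>n. n \<in> C \<Longrightarrow> U n \<subseteq> U N\<close> by blast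
    then show ?thesis by (simp add: U_def)
  qed
  then show ?thesis by (intro exI[of _ "1 / real (Suc N)"]) auto
qed

lemma continuous_on_UNIV_curried_nhd:
  fixes F :: "real \<Rightarrow> real \<Rightarrow> real"
  assumes "continuous_on UNIV (\<lambda>p. F (fst p) (snd p))" "0 < \<epsilon>"
  obtains d where "0 < d" "\<And>x y. \<bar>x - x0\<bar> < d \<Longrightarrow> \<bar>y - y0\<bar> < d \<Longrightarrow> \<bar>F x y - F x0 y0\<bar> < \<epsilon>"
proof -
  obtain d where "0 < d" and d: "\<And>p. dist p (x0, y0) < d \<Longrightarrow> \<bar>F (fst p) (snd p) - F x0 y0\<bar> < \<epsilon>"
    using assms unfolding continuous_on_iff by (metis UNIV_I dist_real_def fst_conv snd_conv)
  have "\<bar>F x y - F x0 y0\<bar> < \<epsilon>" if "\<bar>x - x0\<bar> < d / 2" "\<bar>y - y0\<bar> < d / 2" for x y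
  proof -
    have "dist (x, y) (x0, y0) \<le> \<bar>x - x0\<bar> + \<bar>y - y0\<bar>"
      using sqrt_sum_squares_le_sum_abs[of "x - x0" "y - y0"] by (simp add: dist_Pair_Pair dist_real_def)
    then show ?thesis using d[of "(x, y)"] that by (simp add: dist_real_def)
  qed
  with \<open>0 < d\<close> show ?thesis by (intro that[of "d / 2"]) auto
qed

lemma mvt_lower_bound:
  fixes g g' :: "real \<Rightarrow> real"
  assumes "a \<le> b" and deriv: "\<And>x. a \<le> x \<Longrightarrow> x \<le> b \<Longrightarrow> (g has_real_derivative g' x) (at x)"
    and lower: "\<And>x. a \<le> x \<Longrightarrow> x \<le> b \<Longrightarrow> \<kappa> \<le> g' x"
  shows "\<kappa> * (b - a) \<le> g b - g a"
proof -
  have "(\<lambda>x. g x - \<kappa> * x) a \<le> (\<lambda>x. g x - \<kappa> * x) b"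
  proof (rule DERIV_nonneg_imp_nondecreasing[OF \<open>a \<le> b\<close>])
    fix x assume "a \<le> x" "x \<le> b"
    then show "\<exists>y. ((\<lambda>x. g x - \<kappa> * x) has_real_derivative y) (at x) \<and> 0 \<le> y"
      using deriv lower by (intro exI[of _ "g' x - \<kappa>"]) (auto intro!: derivative_eq_intros)
  qed
  then show ?thesis by (simp add: algebra_simps)
qed

lemma interval_subset_image_of_deriv_ge:
  fixes g g' :: "real \<Rightarrow> real"
  assumes "0 \<le> h" and deriv: "\<And>x. x \<in> {c - h..c + h} \<Longrightarrow> (g has_real_derivative g' x) (at x)"
    and lower: "\<And>x. x \<in> {c - h..c + h} \<Longrightarrow> \<kappa> \<le> g' x"
  shows "{g c - \<kappa> * h..g c + \<kappa> * h} \<subseteq> {g (c - h)..g (c + h)}"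
proof -
  have "\<kappa> * ((c + h) - c) \<le> g (c + h) - g c" "\<kappa> * (c - (c - h)) \<le> g c - g (c - h)"
    by (rule mvt_lower_bound[where g' = g']; use assms in simp)+
  then show ?thesis by auto
qed

lemma nn_integral_substitution_lower_bound:
  fixes g g' f :: "real \<Rightarrow> real" and \<Psi> :: "real \<Rightarrow> ennreal"
  assumes "a < b"
    and deriv: "\<And>x. x \<in> {a..b} \<Longrightarrow> (g has_real_derivative g' x) (at x)"
    and cont: "continuous_on {a..b} g'"
    and g': "\<And>x. x \<in> {a..b} \<Longrightarrow> 0 \<le> g' x \<and> g' x \<le> C" and "0 < C"
    and f: "\<And>x. x \<in> {a..b} \<Longrightarrow> m \<le> f x" and "0 \<le> m"
    and [measurable]: "\<Psi> \<in> borel_measurable borel"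
    and sub: "{p..q} \<subseteq> {g a..g b}"
  shows "ennreal (m / C) * (\<integral>\<^sup>+v. \<Psi> v * indicator {p..q} v \<partial>lborel)
    \<le> (\<integral>\<^sup>+x. ennreal (f x) * \<Psi> (g x) \<partial>lborel)"
proof -
  have "ennreal (m / C) * (\<integral>\<^sup>+v. \<Psi> v * indicator {p..q} v \<partial>lborel)
      \<le> (\<integral>\<^sup>+v. ennreal (m / C) * \<Psi> v * indicator {g a..g b} v \<partial>lborel)"
    using sub by (subst nn_integral_cmult[symmetric]) (auto intro!: nn_integral_mono simp: indicator_def)
  also have "\<dots> = (\<integral>\<^sup>+x. ennreal (m / C) * \<Psi> (g x) * g' x * indicator {a..b} x \<partial>lborel)"
    using g' by (intro nn_integral_substitution_aux[OF _ _ deriv cont _ \<open>a < b\<close>]) auto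
  also have "\<dots> \<le> (\<integral>\<^sup>+x. ennreal (f x) * \<Psi> (g x) \<partial>lborel)"
  proof (rule nn_integral_mono)
    fix x
    show "ennreal (m / C) * \<Psi> (g x) * g' x * indicator {a..b} x \<le> ennreal (f x) * \<Psi> (g x)"
    proof (cases "x \<in> {a..b}")
      case True
      have "m * g' x \<le> m * C" using g'[OF True] \<open>0 \<le> m\<close> by (intro mult_left_mono) auto
      then have "m * g' x / C \<le> m" using \<open>0 < C\<close> by (simp add: pos_divide_le_eq mult.commute)
      then have "m / C * g' x \<le> f x" using f[OF True] by simp
      then have "ennreal (m / C) * ennreal (g' x) \<le> ennreal (f x)"
        using g'[OF True] \<open>0 < C\<close> \<open>0 \<le> m\<close> by (simp add: ennreal_mult'[symmetric] ennreal_leI)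
      moreover have "ennreal (m / C) * \<Psi> (g x) * ennreal (g' x) = ennreal (m / C) * ennreal (g' x) * \<Psi> (g x)"
        by (simp add: mult_ac)
      ultimately show ?thesis using True by (simp add: mult_right_mono)
    qed simp
  qed
  finally show ?thesis .
qed

lemma continuous_on_curried_bounded:
  fixes F :: "real \<Rightarrow> real \<Rightarrow> real"
  assumes "continuous_on UNIV (\<lambda>p. F (fst p) (snd p))"
  obtains K where "0 < K" "\<And>x y. \<bar>x\<bar> \<le> a \<Longrightarrow> \<bar>y\<bar> \<le> b \<Longrightarrow> \<bar>F x y\<bar> \<le> K"
proof -
  define S where "S = (\<lambda>p. F (fst p) (snd p)) ` ({-a..a} \<times> {-b..b})"
  have "continuous_on ({-a..a} \<times> {-b..b}) (\<lambda>p. F (fst p) (snd p))"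
    using assms by (rule continuous_on_subset) simp
  then have "compact S" unfolding S_def
    by (rule compact_continuous_image) (simp add: compact_Times)
  then obtain K where K: "\<And>z. z \<in> S \<Longrightarrow> norm z \<le> K"
    using compact_imp_bounded bounded_iff by metis
  have "\<bar>F x y\<bar> \<le> \<bar>K\<bar> + 1" if "\<bar>x\<bar> \<le> a" "\<bar>y\<bar> \<le> b" for x y
  proof -
    have "(x, y) \<in> {-a..a} \<times> {-b..b}" using that by (auto simp: abs_le_iff)
    then have "F x y \<in> S" unfolding S_def by (metis (no_types, lifting) fst_conv snd_conv image_eqI)
    from K[OF this] show ?thesis by simp
  qed
  then show ?thesis by (intro that[of "\<bar>K\<bar> + 1"]) auto
qed

lemma emeasure_density_Icc_lower_bound:
  fixes f :: "real \<Rightarrow> real"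
  assumes [measurable]: "f \<in> borel_measurable borel" and "a \<le> b" "0 \<le> m" "\<And>x. x \<in> {a..b} \<Longrightarrow> m \<le> f x"
  shows "ennreal (m * (b - a)) \<le> emeasure (density lborel f) {a..b}"
proof -
  have "ennreal (m * (b - a)) = ennreal m * emeasure lborel {a..b}"
    using assms by (simp add: ennreal_mult)
  also have "\<dots> = (\<integral>\<^sup>+x. ennreal m * indicator {a..b} x \<partial>lborel)"
    by (rule nn_integral_cmult_indicator[symmetric]) simp
  also have "\<dots> \<le> (\<integral>\<^sup>+x. ennreal (f x) * indicator {a..b} x \<partial>lborel)"
    using assms(4) by (intro nn_integral_mono) (auto simp: indicator_def ennreal_leI)
  also have "\<dots> = emeasure (density lborel f) {a..b}"
    by (simp add: emeasure_density)
  finally show ?thesis .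
qed

locale noisy_map =
  fixes u ud :: "real \<Rightarrow> real \<Rightarrow> real" and f :: "real \<Rightarrow> real"
  assumes u_cont: "continuous_on UNIV (\<lambda>p. u (fst p) (snd p))"
    and u_deriv: "\<And>c e. (u c has_real_derivative ud c e) (at e)"
    and ud_cont: "continuous_on UNIV (\<lambda>p. ud (fst p) (snd p))"
    and f_measurable[measurable]: "f \<in> borel_measurable borel"
    and f_pos: "\<And>e. 0 < f e" and f_lsc: "lsc_real f"
begin

lemma u_cont_snd: "continuous_on S (u c)"
  using u_deriv by (intro continuous_at_imp_continuous_on) (blast intro: DERIV_isCont)

lemma ud_cont_snd: "continuous_on S (ud c)"
proof -
  have "continuous_on S (\<lambda>e. (\<lambda>p. ud (fst p) (snd p)) (c, e))"
    by (rule continuous_on_compose2[OF ud_cont]) (auto intro!: continuous_intros)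
  then show ?thesis by simp
qed

lemma u_measurable[measurable]: "u c \<in> borel_measurable borel"
  by (rule borel_measurable_continuous_onI[OF u_cont_snd])

lemma exists_zero:
  assumes "s \<noteq> 0" and lin: "\<And>e. \<bar>u c e - s * e\<bar> \<le> B"
  shows "\<exists>e. \<bar>e\<bar> \<le> (B + 1) / \<bar>s\<bar> \<and> u c e = 0"
proof -
  define E where "E = (B + 1) / \<bar>s\<bar>"
  have "0 \<le> B" using lin[of 0] by simp
  then have "0 \<le> E" by (simp add: E_def)
  have "s * E = B + 1 \<or> s * E = - (B + 1)"
    using \<open>s \<noteq> 0\<close> by (cases "0 < s") (simp_all add: E_def)
  then have "u c (- E) \<le> 0 \<and> 0 \<le> u c E \<or> u c E \<le> 0 \<and> 0 \<le> u c (- E)"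
    using lin[of E] lin[of "- E"] by (auto simp: abs_le_iff)
  moreover note IVT'[of "u c" "- E" 0 E] IVT2'[of "u c" E 0 "- E"]
  ultimately obtain e where "- E \<le> e" "e \<le> E" "u c e = 0"
    using \<open>0 \<le> E\<close> u_cont_snd by auto
  then have "\<bar>e\<bar> \<le> E" by (simp add: abs_le_iff)
  with \<open>u c e = 0\<close> show ?thesis unfolding E_def by blast
qed

lemma abs_u_le_near_zero:
  assumes "u c z = 0" and C: "\<And>x. x \<in> {z - r..z + r} \<Longrightarrow> \<bar>ud c x\<bar> \<le> C"
    and e: "e \<in> {z - r..z + r}" and "0 \<le> C"
  shows "\<bar>u c e\<bar> \<le> C * r"
proof -
  have "norm (u c e - u c z) \<le> C * norm (e - z)"
  proof (rule field_differentiable_bound[of "{z - r..z + r}"])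
    show "(u c has_field_derivative ud c x) (at x within {z - r..z + r})" for x
      using u_deriv by (rule has_field_derivative_at_within)
  qed (use C e in auto)
  also have "\<dots> \<le> C * r" using e \<open>0 \<le> C\<close> by (intro mult_left_mono) (auto simp: abs_le_iff)
  finally show ?thesis using \<open>u c z = 0\<close> by simp
qed

lemma zero_nbhd_prob_lower_bound:
  assumes "s \<noteq> 0" and lin: "\<And>c e. \<bar>c\<bar> \<le> M \<Longrightarrow> \<bar>u c e - s * e\<bar> \<le> B" and "0 < \<delta>"
  shows "\<exists>p>0. \<forall>c. \<bar>c\<bar> \<le> M \<longrightarrow> ennreal p \<le> emeasure (density lborel f) {e. \<bar>u c e\<bar> < \<delta>}"
proof -
  define E where "E = (B + 1) / \<bar>s\<bar>"
  obtain C where "0 < C" and C: "\<And>c e. \<bar>c\<bar> \<le> M \<Longrightarrow> \<bar>e\<bar> \<le> E + 1 \<Longrightarrow> \<bar>ud c e\<bar> \<le> C"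
    using continuous_on_curried_bounded[OF ud_cont] by blast
  obtain m where "0 < m" and m: "\<forall>x\<in>{- E - 1..E + 1}. m \<le> f x"
    using lsc_real_pos_bounded_below[OF f_lsc f_pos] by blast
  define r where "r = min 1 (\<delta> / (2 * C))"
  have "C * r \<le> C * (\<delta> / (2 * C))"
    using \<open>0 < C\<close> by (intro mult_left_mono) (auto simp: r_def)
  then have r: "0 < r" "r \<le> 1" "C * r < \<delta>"
    using \<open>0 < C\<close> \<open>0 < \<delta>\<close> by (auto simp: r_def)
  have bound: "ennreal (m * (2 * r)) \<le> emeasure (density lborel f) {e. \<bar>u c e\<bar> < \<delta>}"
    if c: "\<bar>c\<bar> \<le> M" for c
  proof -
    obtain z where z: "\<bar>z\<bar> \<le> E" "u c z = 0"
      using exists_zero[OF \<open>s \<noteq> 0\<close> lin[OF c]] by (auto simp: E_def)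
    have "\<bar>u c e\<bar> \<le> C * r" if "e \<in> {z - r..z + r}" for e
      using C[OF c] z r that \<open>0 < C\<close> by (intro abs_u_le_near_zero) (auto simp: abs_le_iff)
    then have "\<bar>u c e\<bar> < \<delta>" if "e \<in> {z - r..z + r}" for e
      using that r by fastforce
    then have "{z - r..z + r} \<subseteq> {e. \<bar>u c e\<bar> < \<delta>}" by blast
    moreover have "ennreal (m * (2 * r)) \<le> emeasure (density lborel f) {z - r..z + r}"
    proof -
      have "m \<le> f x" if "x \<in> {z - r..z + r}" for x
      proof -
        have "x \<in> {- E - 1..E + 1}" using that z r by (auto simp: abs_le_iff)
        with m show ?thesis by blast
      qed
      then show ?thesis using emeasure_density_Icc_lower_bound[of f "z - r" "z + r" m] r \<open>0 < m\<close> by simp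
    qed
    moreover have "{e. \<bar>u c e\<bar> < \<delta>} \<in> sets borel" by measurable
    ultimately show ?thesis
      using emeasure_mono[of "{z - r..z + r}" "{e. \<bar>u c e\<bar> < \<delta>}" "density lborel f"] by simp
  qed
  have "0 < m * (2 * r)" using \<open>0 < m\<close> r by simp
  with bound show ?thesis by blast
qed

lemma local_density_pos:
  assumes "0 < ud 0 e0"
  shows "\<exists>\<delta>>0. \<exists>p q \<theta>. p < q \<and> 0 < \<theta> \<and> (\<forall>w \<Psi>. \<bar>w\<bar> < \<delta> \<longrightarrow> \<Psi> \<in> borel_measurable borel \<longrightarrow>
    ennreal \<theta> * (\<integral>\<^sup>+v. \<Psi> v * indicator {p..q} v \<partial>lborel) \<le> (\<integral>\<^sup>+e. ennreal (f e) * \<Psi> (u w e) \<partial>lborel))"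
proof -
  define \<kappa> where "\<kappa> = ud 0 e0"
  have "0 < \<kappa>" using assms by (simp add: \<kappa>_def)
  obtain d where "0 < d" and d: "\<And>w e. \<bar>w - 0\<bar> < d \<Longrightarrow> \<bar>e - e0\<bar> < d \<Longrightarrow> \<bar>ud w e - ud 0 e0\<bar> < \<kappa> / 2"
    using continuous_on_UNIV_curried_nhd[OF ud_cont, of "\<kappa> / 2" 0 e0] \<open>0 < \<kappa>\<close> by auto
  define h where "h = d / 2"
  have "0 < h" using \<open>0 < d\<close> by (simp add: h_def)
  obtain d' where "0 < d'" and d': "\<And>w e. \<bar>w - 0\<bar> < d' \<Longrightarrow> \<bar>e - e0\<bar> < d' \<Longrightarrow> \<bar>u w e - u 0 e0\<bar> < \<kappa> * h / 4"
    using continuous_on_UNIV_curried_nhd[OF u_cont, of "\<kappa> * h / 4" 0 e0] \<open>0 < \<kappa>\<close> \<open>0 < h\<close> by auto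
  obtain m where "0 < m" and m: "\<forall>x\<in>{e0 - h..e0 + h}. m \<le> f x"
    using lsc_real_pos_bounded_below[OF f_lsc f_pos] by blast
  define p q where "p = u 0 e0 - \<kappa> * h / 4" and "q = u 0 e0 + \<kappa> * h / 4"
  have "ennreal (m / (3 * \<kappa> / 2)) * (\<integral>\<^sup>+v. \<Psi> v * indicator {p..q} v \<partial>lborel)
      \<le> (\<integral>\<^sup>+e. ennreal (f e) * \<Psi> (u w e) \<partial>lborel)"
    if w: "\<bar>w\<bar> < min d d'" and [measurable]: "\<Psi> \<in> borel_measurable borel" for w \<Psi>
  proof (rule nn_integral_substitution_lower_bound[where g' = "ud w"])
    have ud_near: "\<kappa> / 2 \<le> ud w e \<and> ud w e \<le> 3 * \<kappa> / 2" if "e \<in> {e0 - h..e0 + h}" for e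
    proof -
      have "\<bar>e - e0\<bar> < d" using that \<open>0 < d\<close> by (auto simp: h_def abs_le_iff)
      then have "\<bar>ud w e - \<kappa>\<bar> < \<kappa> / 2" using d[of w e] w by (simp add: \<kappa>_def)
      then show ?thesis unfolding abs_less_iff by linarith
    qed
    then show "\<And>x. x \<in> {e0 - h..e0 + h} \<Longrightarrow> 0 \<le> ud w x \<and> ud w x \<le> 3 * \<kappa> / 2"
      using \<open>0 < \<kappa>\<close> by fastforce
    have "{u w e0 - \<kappa> / 2 * h..u w e0 + \<kappa> / 2 * h} \<subseteq> {u w (e0 - h)..u w (e0 + h)}"
      using ud_near \<open>0 < h\<close> u_deriv by (intro interval_subset_image_of_deriv_ge) auto
    moreover have "\<bar>u w e0 - u 0 e0\<bar> < \<kappa> * h / 4" using d'[of w e0] w \<open>0 < d'\<close> by simp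
    then have "u 0 e0 - \<kappa> * h / 4 < u w e0" "u w e0 < u 0 e0 + \<kappa> * h / 4"
      unfolding abs_less_iff by linarith+
    ultimately show "{p..q} \<subseteq> {u w (e0 - h)..u w (e0 + h)}"
      by (auto simp: p_def q_def)
  qed (use \<open>0 < h\<close> \<open>0 < \<kappa>\<close> \<open>0 < m\<close> m u_deriv ud_cont_snd in auto)
  moreover have "p < q" "0 < m / (3 * \<kappa> / 2)" "0 < min d d'"
    using \<open>0 < \<kappa>\<close> \<open>0 < h\<close> \<open>0 < m\<close> \<open>0 < d\<close> \<open>0 < d'\<close> by (auto simp: p_def q_def)
  ultimately show ?thesis by blast
qed

lemma local_density:
  assumes "ud 0 e0 \<noteq> 0"
  shows "\<exists>\<delta>>0. \<exists>p q \<theta>. p < q \<and> 0 < \<theta> \<and> (\<forall>w \<Psi>. \<bar>w\<bar> < \<delta> \<longrightarrow> \<Psi> \<in> borel_measurable borel \<longrightarrow>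
    ennreal \<theta> * (\<integral>\<^sup>+v. \<Psi> v * indicator {p..q} v \<partial>lborel) \<le> (\<integral>\<^sup>+e. ennreal (f e) * \<Psi> (u w e) \<partial>lborel))"
proof (cases "0 < ud 0 e0")
  case True
  then show ?thesis by (rule local_density_pos)
next
  case False
  interpret reflected: noisy_map "\<lambda>c e. u c (- e)" "\<lambda>c e. - ud c (- e)" "\<lambda>e. f (- e)"
  proof
    have "continuous_on UNIV (\<lambda>p. (\<lambda>p. u (fst p) (snd p)) (fst p, - snd p))"
      "continuous_on UNIV (\<lambda>p. (\<lambda>p. ud (fst p) (snd p)) (fst p, - snd p))"
      by (rule continuous_on_compose2[OF u_cont] continuous_on_compose2[OF ud_cont];
          auto intro!: continuous_intros)+
    then show "continuous_on UNIV (\<lambda>p. u (fst p) (- snd p))"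
      "continuous_on UNIV (\<lambda>p. - ud (fst p) (- snd p))"
      by (auto intro: continuous_on_minus)
    show "((\<lambda>e. u c (- e)) has_real_derivative - ud c (- e)) (at e)" for c e
      using DERIV_chain2[OF u_deriv DERIV_minus[OF DERIV_ident]] by simp
  qed (use f_pos lsc_real_reflect[OF f_lsc] in auto)
  have "0 < - ud 0 (- (- e0))" using False assms by simp
  then obtain \<delta> p q \<theta> where "0 < \<delta>" "p < q" "0 < \<theta>" and bound: "\<And>w \<Psi>. \<bar>w\<bar> < \<delta> \<Longrightarrow>
      \<Psi> \<in> borel_measurable borel \<Longrightarrow> ennreal \<theta> * (\<integral>\<^sup>+v. \<Psi> v * indicator {p..q} v \<partial>lborel)
        \<le> (\<integral>\<^sup>+e. ennreal (f (- e)) * \<Psi> (u w (- e)) \<partial>lborel)"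
    using reflected.local_density_pos by blast
  have "(\<integral>\<^sup>+e. ennreal (f (- e)) * \<Psi> (u w (- e)) \<partial>lborel) = (\<integral>\<^sup>+e. ennreal (f e) * \<Psi> (u w e) \<partial>lborel)"
    if [measurable]: "\<Psi> \<in> borel_measurable borel" for w \<Psi>
    using nn_integral_real_affine[of "\<lambda>e. ennreal (f e) * \<Psi> (u w e)" "- 1" 0] by simp
  with \<open>0 < \<delta>\<close> \<open>p < q\<close> \<open>0 < \<theta>\<close> bound show ?thesis by metis
qed

end

section \<open>The PARNN chain\<close>

locale parnn =
  fixes \<psi>1 \<psi>2 :: real and g g' :: "real \<Rightarrow> real \<Rightarrow> real" and f :: "real \<Rightarrow> real"
    and D :: "real measure" and B :: real
  assumes D_def: "D = density lborel (\<lambda>e. ennreal (f e))"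
    and f_measurable[measurable]: "f \<in> borel_measurable borel" and D_prob: "prob_space D"
    and f_pos: "\<And>e. 0 < f e" and f_lsc: "lsc_real f"
    and eps_mean: "integrable D (\<lambda>e. \<bar>e\<bar>)"
    and g_cont: "continuous_on UNIV (\<lambda>p. g (fst p) (snd p))"
    and g_bound: "\<And>y e. \<bar>g y e\<bar> \<le> B"
    and g_diag_deriv: "\<And>w t. ((\<lambda>t. g (w + t) t) has_real_derivative g' w t) (at t)"
    and g'_cont: "continuous_on UNIV (\<lambda>p. g' (fst p) (snd p))"
    and psi_sum: "\<psi>1 + \<psi>2 \<noteq> 0"
    and psi1: "\<bar>\<psi>1\<bar> < 1"
begin

definition h :: "real \<times> real \<Rightarrow> real" where
  "h x = \<psi>1 * fst x + \<psi>2 * snd x + g (fst x) (snd x)"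

definition noise_kernel :: "real \<Rightarrow> (real \<times> real) measure" where
  "noise_kernel v = distr D borel (\<lambda>e. (v + e, e))"

abbreviation P :: "real \<times> real \<Rightarrow> (real \<times> real) measure" where
  "P \<equiv> trans_kernel (parnn_step \<psi>1 \<psi>2 g) D"

lemma P_eq: "P x = noise_kernel (h x)"
  by (simp add: trans_kernel_def parnn_step_def noise_kernel_def h_def)

lemma sets_D[measurable_cong]: "sets D = sets borel"
  by (simp add: D_def)

lemma sets_noise_kernel[simp, measurable_cong]: "sets (noise_kernel v) = sets borel"
  by (simp add: noise_kernel_def)

lemma h_measurable[measurable]: "h \<in> borel_measurable borel"
proof (rule borel_measurable_continuous_onI)
  show "continuous_on UNIV h"
    unfolding h_def by (intro continuous_intros g_cont)
qed

lemma noise_kernel_measurable[measurable]: "noise_kernel \<in> borel \<rightarrow>\<^sub>M prob_algebra borel"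
  unfolding noise_kernel_def
proof (rule measurable_distr_prob_space2[where M = borel])
  show "(\<lambda>x. D) \<in> (borel :: real measure) \<rightarrow>\<^sub>M prob_algebra borel"
    using D_prob by (auto simp: space_prob_algebra sets_D)
qed measurable

lemma nn_integral_noise_kernel:
  "F \<in> borel_measurable borel \<Longrightarrow> (\<integral>\<^sup>+y. F y \<partial>noise_kernel v) = (\<integral>\<^sup>+e. F (v + e, e) \<partial>D)"
  unfolding noise_kernel_def by (subst nn_integral_distr) (auto simp: sets_D)

lemma nn_integral_D:
  "H \<in> borel_measurable borel \<Longrightarrow> (\<integral>\<^sup>+e. H e \<partial>D) = (\<integral>\<^sup>+e. ennreal (f e) * H e \<partial>lborel)"
  unfolding D_def by (rule nn_integral_density) auto

sublocale markov_kernel_R2 P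
proof
  have "(\<lambda>x. noise_kernel (h x)) \<in> borel \<rightarrow>\<^sub>M prob_algebra borel" by measurable
  then show "P \<in> borel \<rightarrow>\<^sub>M prob_algebra borel" by (simp add: P_eq[abs_def])
qed

definition V :: "real \<times> real \<Rightarrow> real" where
  "V x = \<bar>fst x\<bar> + (\<bar>\<psi>2\<bar> + 1) * \<bar>snd x\<bar>"

definition \<gamma> :: real where
  "\<gamma> = max \<bar>\<psi>1\<bar> (\<bar>\<psi>2\<bar> / (\<bar>\<psi>2\<bar> + 1))"

definition K :: real where
  "K = B + (\<bar>\<psi>2\<bar> + 2) * (\<integral>e. \<bar>e\<bar> \<partial>D)"

lemma V_measurable[measurable]: "V \<in> borel_measurable borel"
  unfolding V_def by (intro borel_measurable_continuous_onI continuous_intros)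

lemma V_nonneg: "0 \<le> V x"
  by (simp add: V_def add_nonneg_nonneg)

lemma h_bound: "\<bar>h x\<bar> \<le> \<gamma> * V x + B"
proof -
  have "\<bar>\<psi>1 * fst x\<bar> \<le> \<gamma> * \<bar>fst x\<bar>"
    by (simp add: abs_mult \<gamma>_def mult_right_mono)
  moreover have "\<bar>\<psi>2 * snd x\<bar> \<le> \<gamma> * ((\<bar>\<psi>2\<bar> + 1) * \<bar>snd x\<bar>)"
  proof -
    have "\<bar>\<psi>2 * snd x\<bar> = \<bar>\<psi>2\<bar> / (\<bar>\<psi>2\<bar> + 1) * ((\<bar>\<psi>2\<bar> + 1) * \<bar>snd x\<bar>)"
      by (simp add: abs_mult add_nonneg_pos)
    also have "\<dots> \<le> \<gamma> * ((\<bar>\<psi>2\<bar> + 1) * \<bar>snd x\<bar>)"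
      by (intro mult_right_mono) (auto simp: \<gamma>_def)
    finally show ?thesis .
  qed
  moreover have "\<bar>h x\<bar> \<le> \<bar>\<psi>1 * fst x\<bar> + \<bar>\<psi>2 * snd x\<bar> + \<bar>g (fst x) (snd x)\<bar>"
    unfolding h_def by linarith
  ultimately show ?thesis
    using g_bound[of "fst x" "snd x"] by (simp add: V_def algebra_simps)
qed

lemma drift: "(\<integral>\<^sup>+y. V y \<partial>P x) \<le> ennreal (\<gamma> * V x + K)"
proof -
  interpret prob_space D by (rule D_prob)
  have "(\<integral>\<^sup>+y. V y \<partial>P x) = (\<integral>\<^sup>+e. V (h x + e, e) \<partial>D)"
    by (simp add: P_eq nn_integral_noise_kernel)
  also have "\<dots> \<le> (\<integral>\<^sup>+e. ennreal (\<bar>h x\<bar> + (\<bar>\<psi>2\<bar> + 2) * \<bar>e\<bar>) \<partial>D)"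
    by (intro nn_integral_mono ennreal_leI) (simp add: V_def algebra_simps abs_triangle_ineq)
  also have "\<dots> = ennreal (\<bar>h x\<bar> + (\<bar>\<psi>2\<bar> + 2) * (\<integral>e. \<bar>e\<bar> \<partial>D))"
    using eps_mean by (subst nn_integral_eq_integral) (auto simp: prob_space)
  also have "\<dots> \<le> ennreal (\<gamma> * V x + K)"
    using h_bound[of x] by (intro ennreal_leI) (simp add: K_def)
  finally show ?thesis .
qed

sublocale drift_kernel P V \<gamma> K
proof
  show "0 \<le> K"
    using g_bound[of 0 0] by (simp add: K_def integral_nonneg_AE add_nonneg_nonneg)
qed (use V_nonneg drift psi1 in \<open>auto simp: \<gamma>_def add_nonneg_pos\<close>)

text \<open>If \<open>c\<^sub>t = h x\<^sub>t\<close>, then \<open>x\<^sub>t\<^sub>+\<^sub>1 = (c\<^sub>t + \<epsilon>\<^sub>t\<^sub>+\<^sub>1, \<epsilon>\<^sub>t\<^sub>+\<^sub>1)\<close> and hence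
  \<open>c\<^sub>t\<^sub>+\<^sub>1 = u c\<^sub>t \<epsilon>\<^sub>t\<^sub>+\<^sub>1\<close>.\<close>

definition u :: "real \<Rightarrow> real \<Rightarrow> real" where
  "u w e = h (w + e, e)"

definition ud :: "real \<Rightarrow> real \<Rightarrow> real" where
  "ud w e = \<psi>1 + \<psi>2 + g' w e"

lemma noisy_map: "noisy_map u ud f"
proof
  have "continuous_on UNIV (\<lambda>p. (\<lambda>x. h x) (fst p + snd p, snd p))"
    by (rule continuous_on_compose2[of UNIV]) (auto simp: h_def intro!: continuous_intros g_cont)
  then show "continuous_on UNIV (\<lambda>p. u (fst p) (snd p))" by (simp add: u_def)
  show "(u w has_real_derivative ud w e) (at e)" for w e
    unfolding u_def[abs_def] h_def fst_conv snd_conv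
    by (auto intro!: derivative_eq_intros g_diag_deriv simp: ud_def)
  show "continuous_on UNIV (\<lambda>p. ud (fst p) (snd p))"
    unfolding ud_def by (intro continuous_intros g'_cont)
qed (use f_pos f_lsc in auto)

lemma ud_nonzero: "\<exists>e0. ud 0 e0 \<noteq> 0"
proof (rule ccontr)
  assume "\<nexists>e0. ud 0 e0 \<noteq> 0"
  then have "\<forall>e. (u 0 has_real_derivative 0) (at e)"
    using noisy_map.u_deriv[OF noisy_map, of 0] by auto
  define e1 where "e1 = (2 * B + 1) / (\<psi>1 + \<psi>2)"
  have "u 0 e1 = u 0 0" by (rule DERIV_isconst_all) fact
  moreover have "u 0 e1 = (\<psi>1 + \<psi>2) * e1 + g e1 e1" "u 0 0 = g 0 0"
    by (simp_all add: u_def h_def algebra_simps)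
  moreover have "(\<psi>1 + \<psi>2) * e1 = 2 * B + 1" using psi_sum by (simp add: e1_def)
  ultimately show False
    using g_bound[of e1 e1] g_bound[of 0 0] by (simp add: abs_le_iff)
qed

lemma u_linear_growth:
  assumes "\<bar>c\<bar> \<le> M"
  shows "\<bar>u c e - (\<psi>1 + \<psi>2) * e\<bar> \<le> \<bar>\<psi>1\<bar> * M + B"
proof -
  have "u c e - (\<psi>1 + \<psi>2) * e = \<psi>1 * c + g (c + e) e"
    by (simp add: u_def h_def algebra_simps)
  moreover have "\<bar>\<psi>1 * c\<bar> \<le> \<bar>\<psi>1\<bar> * M"
    using assms by (simp add: abs_mult mult_left_mono)
  ultimately show ?thesis
    using g_bound[of "c + e" e] abs_triangle_ineq[of "\<psi>1 * c" "g (c + e) e"] by linarith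
qed

lemma nn_integral_P:
  "F \<in> borel_measurable borel \<Longrightarrow> (\<integral>\<^sup>+y. F y \<partial>P z) = (\<integral>\<^sup>+e. F (h z + e, e) \<partial>D)"
  by (simp add: P_eq nn_integral_noise_kernel)

lemma nn_integral_trans_iter_3:
  assumes [measurable]: "F \<in> borel_measurable borel"
  shows "(\<integral>\<^sup>+y. F y \<partial>trans_iter P 3 x)
    = (\<integral>\<^sup>+e1. \<integral>\<^sup>+e2. \<integral>\<^sup>+y. F y \<partial>noise_kernel (u (u (h x) e1) e2) \<partial>D \<partial>D)"
proof -
  define F1 where "F1 z = (\<integral>\<^sup>+y. F y \<partial>P z)" for z
  define F2 where "F2 z = (\<integral>\<^sup>+y. F1 y \<partial>P z)" for z
  have F_meas[measurable]: "F1 \<in> borel_measurable borel" "F2 \<in> borel_measurable borel"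
    unfolding F1_def[abs_def] F2_def[abs_def] by measurable
  have F2: "F2 z = (\<integral>\<^sup>+e2. \<integral>\<^sup>+y. F y \<partial>noise_kernel (u (h z) e2) \<partial>D)" for z
  proof -
    have "F2 z = (\<integral>\<^sup>+e2. F1 (h z + e2, e2) \<partial>D)"
      unfolding F2_def by (rule nn_integral_P) simp
    then show ?thesis by (simp add: F1_def P_eq u_def)
  qed
  have "(\<integral>\<^sup>+y. F y \<partial>trans_iter P (Suc (Suc (Suc 0))) x) = (\<integral>\<^sup>+z. F1 z \<partial>trans_iter P (Suc (Suc 0)) x)"
    unfolding F1_def by (rule nn_integral_trans_iter_Suc) simp
  also have "\<dots> = (\<integral>\<^sup>+z. F2 z \<partial>trans_iter P (Suc 0) x)"
    unfolding F2_def by (rule nn_integral_trans_iter_Suc) simp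
  also have "\<dots> = (\<integral>\<^sup>+z. F2 z \<partial>P x)"
    by (subst nn_integral_trans_iter_Suc) (simp_all add: nn_integral_return)
  also have "\<dots> = (\<integral>\<^sup>+e1. \<integral>\<^sup>+e2. \<integral>\<^sup>+y. F y \<partial>noise_kernel (u (u (h x) e1) e2) \<partial>D \<partial>D)"
    unfolding nn_integral_P[OF F_meas(2)] by (simp add: F2 u_def)
  finally show ?thesis by (simp add: numeral_3_eq_3)
qed

lemma emeasure_noise_kernel_measurable[measurable]:
  "A \<in> sets borel \<Longrightarrow> (\<lambda>v. emeasure (noise_kernel v) A) \<in> borel_measurable borel"
  by (rule measurable_compose[OF measurable_prob_algebraD[OF noise_kernel_measurable]
        measurable_emeasure_subprob_algebra])

lemma emeasure_trans_iter_3_lower_bound: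
  assumes dens: "\<And>w \<Psi>. \<bar>w\<bar> < \<delta> \<Longrightarrow> \<Psi> \<in> borel_measurable borel \<Longrightarrow>
      ennreal \<theta> * (\<integral>\<^sup>+v. \<Psi> v * indicator {p..q} v \<partial>lborel) \<le> (\<integral>\<^sup>+e. ennreal (f e) * \<Psi> (u w e) \<partial>lborel)"
    and hit: "ennreal p0 \<le> emeasure D {e. \<bar>u (h x) e\<bar> < \<delta>}"
    and "0 \<le> \<theta>" "0 \<le> p0" and A: "A \<in> sets borel"
  shows "ennreal (\<theta> * p0) * (\<integral>\<^sup>+v. emeasure (noise_kernel v) A * indicator {p..q} v \<partial>lborel)
    \<le> emeasure (trans_iter P 3 x) A"
proof -
  define J where "J = (\<integral>\<^sup>+v. emeasure (noise_kernel v) A * indicator {p..q} v \<partial>lborel)"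
  define S where "S = {e. \<bar>u (h x) e\<bar> < \<delta>}"
  have S: "S \<in> sets D"
    unfolding S_def sets_D using noisy_map.u_measurable[OF noisy_map] by measurable
  have "ennreal (\<theta> * p0) * J = ennreal p0 * (ennreal \<theta> * J)"
    using assms by (simp add: ennreal_mult mult_ac)
  also have "\<dots> \<le> emeasure D S * (ennreal \<theta> * J)"
    using hit by (intro mult_right_mono) (auto simp: S_def)
  also have "\<dots> = (\<integral>\<^sup>+e1. ennreal \<theta> * J * indicator S e1 \<partial>D)"
    by (subst nn_integral_cmult_indicator[OF S]) (simp add: mult.commute)
  also have "\<dots> \<le> (\<integral>\<^sup>+e1. \<integral>\<^sup>+e2. emeasure (noise_kernel (u (u (h x) e1) e2)) A \<partial>D \<partial>D)"
  proof (rule nn_integral_mono)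
    fix e1
    show "ennreal \<theta> * J * indicator S e1 \<le> (\<integral>\<^sup>+e2. emeasure (noise_kernel (u (u (h x) e1) e2)) A \<partial>D)"
      using dens[of "u (h x) e1" "\<lambda>v. emeasure (noise_kernel v) A"] A noisy_map.u_measurable[OF noisy_map]
      by (auto simp: S_def J_def indicator_def nn_integral_D)
  qed
  also have "\<dots> = emeasure (trans_iter P 3 x) A"
    using nn_integral_trans_iter_3[of "indicator A" x] A by (simp add: nn_integral_indicator)
  finally show ?thesis by (simp add: J_def)
qed

lemma emeasure_uniform_bind_noise_kernel:
  assumes "p < q" "A \<in> sets borel"
  shows "emeasure (uniform_measure lborel {p..q} \<bind> noise_kernel) A
    = (\<integral>\<^sup>+v. emeasure (noise_kernel v) A * indicator {p..q} v \<partial>lborel) / ennreal (q - p)"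
proof -
  have "uniform_measure lborel {p..q} \<in> space (prob_algebra borel)"
    using assms by (auto simp: space_prob_algebra intro!: prob_space_uniform_measure)
  then show ?thesis
    using assms by (simp add: emeasure_bind_prob_algebra[OF _ noise_kernel_measurable] nn_integral_uniform_measure)
qed

lemma sublevel_sets_small:
  "\<exists>\<alpha> \<nu>. 0 < \<alpha> \<and> \<alpha> \<le> 1 \<and> prob_space \<nu> \<and> sets \<nu> = sets borel \<and>
     (\<forall>x. V x \<le> R \<longrightarrow> scale_measure (ennreal \<alpha>) \<nu> \<le> trans_iter P 3 x)"
proof -
  interpret noisy_map u ud f by (rule noisy_map)
  obtain e0 where "ud 0 e0 \<noteq> 0" using ud_nonzero by blast
  then obtain \<delta> p q \<theta> where "0 < \<delta>" "p < q" "0 < \<theta>" and dens: "\<And>w \<Psi>. \<bar>w\<bar> < \<delta> \<Longrightarrow>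
      \<Psi> \<in> borel_measurable borel \<Longrightarrow> ennreal \<theta> * (\<integral>\<^sup>+v. \<Psi> v * indicator {p..q} v \<partial>lborel)
        \<le> (\<integral>\<^sup>+e. ennreal (f e) * \<Psi> (u w e) \<partial>lborel)"
    using local_density by blast
  obtain p0 where "0 < p0" and hit: "\<And>c. \<bar>c\<bar> \<le> \<gamma> * R + B \<Longrightarrow> ennreal p0 \<le> emeasure D {e. \<bar>u c e\<bar> < \<delta>}"
    using zero_nbhd_prob_lower_bound[OF psi_sum u_linear_growth[of _ "\<gamma> * R + B"] \<open>0 < \<delta>\<close>]
    by (auto simp: D_def)
  define \<nu> where "\<nu> = uniform_measure lborel {p..q} \<bind> noise_kernel"
  define \<alpha> where "\<alpha> = min 1 (\<theta> * p0 * (q - p))"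
  have \<nu>: "prob_space \<nu>" "sets \<nu> = sets borel"
    using \<open>p < q\<close> unfolding \<nu>_def
    by (auto intro!: prob_space_bind'[OF _ noise_kernel_measurable] sets_bind'[OF _ noise_kernel_measurable]
        prob_space_uniform_measure simp: space_prob_algebra)
  have "scale_measure (ennreal \<alpha>) \<nu> \<le> trans_iter P 3 x" if "V x \<le> R" for x
  proof (subst le_measure)
    have "\<bar>h x\<bar> \<le> \<gamma> * R + B"
      using h_bound[of x] mult_left_mono[OF that \<gamma>_nonneg] by linarith
    then have hx: "ennreal p0 \<le> emeasure D {e. \<bar>u (h x) e\<bar> < \<delta>}" by (rule hit)
    show "\<forall>A\<in>sets (scale_measure (ennreal \<alpha>) \<nu>). emeasure (scale_measure (ennreal \<alpha>) \<nu>) A \<le> emeasure (trans_iter P 3 x) A"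
    proof
      fix A assume "A \<in> sets (scale_measure (ennreal \<alpha>) \<nu>)"
      then have A: "A \<in> sets borel" using \<nu> by simp
      define J where "J = (\<integral>\<^sup>+v. emeasure (noise_kernel v) A * indicator {p..q} v \<partial>lborel)"
      have "emeasure (scale_measure (ennreal \<alpha>) \<nu>) A \<le> ennreal (\<theta> * p0 * (q - p)) * (J / ennreal (q - p))"
        using emeasure_uniform_bind_noise_kernel[OF \<open>p < q\<close> A]
        by (simp add: \<nu>_def J_def \<alpha>_def mult_right_mono ennreal_leI)
      also have "\<dots> = ennreal (\<theta> * p0) * J"
        using \<open>p < q\<close> \<open>0 < \<theta>\<close> \<open>0 < p0\<close>
        by (simp add: ennreal_mult ennreal_times_divide ennreal_mult_divide_eq mult_ac)
      also have "\<dots> \<le> emeasure (trans_iter P 3 x) A"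
        unfolding J_def using \<open>0 < \<theta>\<close> \<open>0 < p0\<close>
        by (intro emeasure_trans_iter_3_lower_bound[OF dens hx _ _ A]) auto
      finally show "emeasure (scale_measure (ennreal \<alpha>) \<nu>) A \<le> emeasure (trans_iter P 3 x) A" .
    qed
  qed (use \<nu> in simp)
  moreover have "0 < \<alpha>" "\<alpha> \<le> 1"
    using \<open>p < q\<close> \<open>0 < \<theta>\<close> \<open>0 < p0\<close> by (auto simp: \<alpha>_def)
  ultimately show ?thesis using \<nu> by blast
qed

theorem geometrically_ergodic_P: "geometrically_ergodic P"
  using sublevel_sets_small by (intro geometrically_ergodic_if_sublevel_sets_small[of 3]) auto

end

lemma smooth_real_imp_C1:
  assumes "smooth_real G"
  obtains G' where "\<And>x. (G has_real_derivative G' x) (at x)" "continuous_on UNIV G'"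
proof -
  obtain D where D0: "D 0 = G" and D: "\<And>n x. (D n has_real_derivative D (Suc n) x) (at x)"
    using assms unfolding smooth_real_def by blast
  have "continuous_on UNIV (D 1)"
    using D[of 1] by (intro continuous_at_imp_continuous_on) (blast intro: DERIV_isCont)
  with D[of 0] D0 show ?thesis by (intro that) auto
qed

lemma parnn_g_continuous:
  assumes "continuous_on UNIV G"
  shows "continuous_on UNIV (\<lambda>p. parnn_g G k \<nu> \<beta> \<phi>1 \<phi>2 \<mu> (fst p) (snd p))"
proof -
  have "continuous_on UNIV (\<lambda>p. G (\<phi>1 i * fst p + \<phi>2 i * snd p + \<mu> i))" for i
    by (rule continuous_on_compose2[OF assms]) (auto intro!: continuous_intros)
  then show ?thesis unfolding parnn_g_def by (intro continuous_intros)
qed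

lemma parnn_g_bounded:
  assumes "bounded (range G)"
  obtains B where "\<And>y e. \<bar>parnn_g G k \<nu> \<beta> \<phi>1 \<phi>2 \<mu> y e\<bar> \<le> B"
proof -
  obtain C where C: "\<And>x. \<bar>G x\<bar> \<le> C" using assms unfolding bounded_iff by auto
  have "\<bar>parnn_g G k \<nu> \<beta> \<phi>1 \<phi>2 \<mu> y e\<bar> \<le> \<bar>\<nu>\<bar> + (\<Sum>i=1..k. \<bar>\<beta> i\<bar> * C)" for y e
  proof -
    have "\<bar>\<Sum>i=1..k. \<beta> i * G (\<phi>1 i * y + \<phi>2 i * e + \<mu> i)\<bar> \<le> (\<Sum>i=1..k. \<bar>\<beta> i\<bar> * C)"
      by (rule order_trans[OF sum_abs sum_mono]) (simp add: abs_mult mult_left_mono C)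
    then show ?thesis unfolding parnn_g_def by linarith
  qed
  then show ?thesis by (rule that)
qed

definition parnn_g_diag_deriv ::
  "(real \<Rightarrow> real) \<Rightarrow> nat \<Rightarrow> (nat \<Rightarrow> real) \<Rightarrow> (nat \<Rightarrow> real) \<Rightarrow> (nat \<Rightarrow> real) \<Rightarrow> (nat \<Rightarrow> real)
    \<Rightarrow> real \<Rightarrow> real \<Rightarrow> real" where
  "parnn_g_diag_deriv G' k \<beta> \<phi>1 \<phi>2 \<mu> w t =
     (\<Sum>i=1..k. \<beta> i * G' (\<phi>1 i * (w + t) + \<phi>2 i * t + \<mu> i) * (\<phi>1 i + \<phi>2 i))"

lemma parnn_g_diag_has_deriv:
  assumes "\<And>x. (G has_real_derivative G' x) (at x)"
  shows "((\<lambda>t. parnn_g G k \<nu> \<beta> \<phi>1 \<phi>2 \<mu> (w + t) t) has_real_derivative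
    parnn_g_diag_deriv G' k \<beta> \<phi>1 \<phi>2 \<mu> w t) (at t)"
  unfolding parnn_g_def parnn_g_diag_deriv_def
  by (auto intro!: derivative_eq_intros DERIV_chain2[OF assms] simp: algebra_simps)

lemma parnn_g_diag_deriv_continuous:
  assumes "continuous_on UNIV G'"
  shows "continuous_on UNIV (\<lambda>p. parnn_g_diag_deriv G' k \<beta> \<phi>1 \<phi>2 \<mu> (fst p) (snd p))"
proof -
  have "continuous_on UNIV (\<lambda>p. G' (\<phi>1 i * (fst p + snd p) + \<phi>2 i * snd p + \<mu> i))" for i
    by (rule continuous_on_compose2[OF assms]) (auto intro!: continuous_intros)
  then show ?thesis unfolding parnn_g_diag_deriv_def by (intro continuous_intros)
qed

theorem theorem2:
  fixes k :: nat and G :: "real \<Rightarrow> real"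
    and \<psi>1 \<psi>2 \<nu> :: real and \<beta> \<phi>1 \<phi>2 \<mu> :: "nat \<Rightarrow> real"
    and f :: "real \<Rightarrow> real" and D :: "real measure"
  assumes k_pos: "k \<ge> 1"
    and D_def: "D = density lborel (\<lambda>e. ennreal (f e))"
    and f_meas: "f \<in> borel_measurable borel"
    and D_prob: "prob_space D"
    and f_pos: "\<forall>e. f e > 0"
    and f_lsc: "lsc_real f"
    and G_smooth: "smooth_real G"
    and G_bounded: "bounded (range G)"
    and G_nonconst: "\<exists>a b. G a \<noteq> G b"
    and G_asymp: "asymp_const G"
    and psi_sum: "\<psi>1 + \<psi>2 \<noteq> 0"
    and eps_mean: "integrable D (\<lambda>e. \<bar>e\<bar>)"
    and psi1: "\<bar>\<psi>1\<bar> < 1"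
  shows "geometrically_ergodic
           (trans_kernel (parnn_step \<psi>1 \<psi>2 (parnn_g G k \<nu> \<beta> \<phi>1 \<phi>2 \<mu>)) D)"
proof -
  obtain G' where G': "\<And>x. (G has_real_derivative G' x) (at x)" and G'_cont: "continuous_on UNIV G'"
    using smooth_real_imp_C1[OF G_smooth] by blast
  obtain B where B: "\<And>y e. \<bar>parnn_g G k \<nu> \<beta> \<phi>1 \<phi>2 \<mu> y e\<bar> \<le> B"
    using parnn_g_bounded[OF G_bounded] by blast
  have G_cont: "continuous_on UNIV G"
    using G' by (intro continuous_at_imp_continuous_on) (blast intro: DERIV_isCont)
  have f_pos': "\<And>e. 0 < f e" using f_pos by blast
  interpret parnn \<psi>1 \<psi>2 "parnn_g G k \<nu> \<beta> \<phi>1 \<phi>2 \<mu>" "parnn_g_diag_deriv G' k \<beta> \<phi>1 \<phi>2 \<mu>" f D B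
    by (rule parnn.intro[OF D_def f_meas D_prob f_pos' f_lsc eps_mean parnn_g_continuous[OF G_cont] B
          parnn_g_diag_has_deriv[OF G'] parnn_g_diag_deriv_continuous[OF G'_cont] psi_sum psi1])
  show ?thesis by (rule geometrically_ergodic_P)
qed

end
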